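(* Let $\{\gamma_{tT}\}_{0\le t\le T}$ be a standard gamma bridge with parameter $m>0$ and $X_T>0$ an independent random variable; let $\xi_t=X_T\gamma_{tT}$. Fix $s$ with $0\le s<T$ and define $Z_T=(1-\gamma_{sT})X_T$ and, for $s\le t\le T$, $$\delta_{tT}=\frac{\gamma_{tT}-\gamma_{sT}}{1-\gamma_{sT}}.$$ Then $\xi_t=\xi_s+Z_T\,\delta_{tT}$ for all $s\le t\le T$; the process $\{\delta_{tT}\}_{s\le t\le T}$ is a standard gamma bridge over $[s,T]$ with parameter $m$ (i.e. it has the law of $\{\gamma'_{t-s}/\gamma'_{T-s}\}_{s\le t\le T}$ for a standard gamma process $\gamma'$ with growth rate $m$), and $\{\delta_{tT}\}_{s\le t\le T}$ is independent of $(\xi_s,Z_T)$.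
   Context: A standard gamma process with growth rate $m>0$ on a probability space $(\Omega,\mathcal F,\mathbb Q)$ is a process $\{\gamma_t\}_{t\ge0}$ with $\gamma_0=0$ and independent increments, such that for $0\le s<t$ the increment $\gamma_t-\gamma_s$ has the gamma density $\mathbf 1_{\{x>0\}}x^{m(t-s)-1}e^{-x}/\Gamma[m(t-s)]$. A standard gamma bridge over $[0,T]$ with parameter $m$ is any process with the law of $\{\gamma_t/\gamma_T\}_{0\le t\le T}$ for such a gamma process. *)

theory Defs
  imports "HOL-Probability.Probability"
begin

definition gamma_process :: "'b measure \<Rightarrow> (real \<Rightarrow> 'b \<Rightarrow> real) \<Rightarrow> real \<Rightarrow> bool" where
  "gamma_process N g m \<longleftrightarrow>
     prob_space N \<and>
     (\<forall>t\<ge>0. g t \<in> borel_measurable N) \<and>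
     (\<forall>\<omega>\<in>space N. g 0 \<omega> = 0) \<and>
     (\<forall>(ts :: nat \<Rightarrow> real) n. 0 \<le> ts 0 \<and> (\<forall>i<n. ts i < ts (Suc i)) \<longrightarrow>
        prob_space.indep_vars N (\<lambda>_. borel) (\<lambda>i \<omega>. g (ts (Suc i)) \<omega> - g (ts i) \<omega>) {..<n}) \<and>
     (\<forall>s t. 0 \<le> s \<and> s < t \<longrightarrow>
        distributed N lborel (\<lambda>\<omega>. g t \<omega> - g s \<omega>)
          (\<lambda>x. ennreal (indicator {0<..} x * x powr (m * (t - s) - 1) * exp (- x)
                         / Gamma (m * (t - s)))))"

definition process_law :: "'a measure \<Rightarrow> real set \<Rightarrow> (real \<Rightarrow> 'a \<Rightarrow> real) \<Rightarrow> (real \<Rightarrow> real) measure" where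
  "process_law M I b = distr M (PiM I (\<lambda>_. borel)) (\<lambda>\<omega>. \<lambda>t\<in>I. b t \<omega>)"

definition gamma_bridge :: "'a measure \<Rightarrow> (real \<Rightarrow> 'a \<Rightarrow> real) \<Rightarrow> real \<Rightarrow> real \<Rightarrow> real \<Rightarrow> bool" where
  "gamma_bridge M b s T m \<longleftrightarrow>
     (\<forall>t\<in>{s..T}. b t \<in> borel_measurable M) \<and>
     (\<exists>(N :: (real \<Rightarrow> real) measure) g. gamma_process N g m \<and>
        process_law M {s..T} b = process_law N {s..T} (\<lambda>t \<omega>. g (t - s) \<omega> / g (T - s) \<omega>))"

text \<open>Independence of two random variables with possibly different codomain types
  (the library's indep_var forces equal codomain types); this is literally
  the library's indep_vars_def2 specialised to two variables.\<close>
definition indep_rv :: "'a measure \<Rightarrow> 'b measure \<Rightarrow> ('a \<Rightarrow> 'b) \<Rightarrow> 'c measure \<Rightarrow> ('a \<Rightarrow> 'c) \<Rightarrow> bool" where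
  "indep_rv M Ma A Mb B \<longleftrightarrow>
     A \<in> measurable M Ma \<and> B \<in> measurable M Mb \<and>
     prob_space.indep_set M {A -` S \<inter> space M | S. S \<in> sets Ma} {B -` S \<inter> space M | S. S \<in> sets Mb}"

end

theory Submission
  imports Defs
begin

text \<open>
  Realise the bridge as g(t)/g(T) for a
  gamma process g.  Renormalised at s, the bridge becomes the normalised increments
  (g(t) - g(s))/(g(T) - g(s)) of g on [s,T]; by the stationarity of the increments these form a
  gamma bridge over [s,T].  The heart of the proof is that they are independent of g(s)/g(T),
  the value of the bridge at s.  For finitely many times this is the gamma-Dirichlet
  independence: the proportions of independent gamma variables are independent of their sum,
  proved by induction from Lukacs' theorem for two gamma variables, S/(S+Z) independent of S+Z;
  a pi-system argument extends it to the whole process.  Finally, the independence of the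
  terminal value X from the bridge lets us regroup: the renormalised bridge is independent of
  (X, bridge at s), hence of (X times bridge at s, X times (1 - bridge at s)).
\<close>

section \<open>Product measures and laws of random elements\<close>

lemma distr_transfer:
  assumes law: "distr M P F = distr N P G"
    and F: "F \<in> measurable M P" and G: "G \<in> measurable N P" and h: "h \<in> measurable P Q"
  shows "distr M Q (\<lambda>\<omega>. h (F \<omega>)) = distr N Q (\<lambda>\<omega>. h (G \<omega>))"
proof -
  have "distr M Q (\<lambda>\<omega>. h (F \<omega>)) = distr (distr M P F) Q h"
    using F h by (simp add: distr_distr comp_def)
  also have "\<dots> = distr (distr N P G) Q h" by (simp only: law)
  also have "\<dots> = distr N Q (\<lambda>\<omega>. h (G \<omega>))"
    using G h by (simp add: distr_distr comp_def)
  finally show ?thesis .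
qed

lemma distr_pair_snd_prob:
  assumes "prob_space M1" "prob_space M2"
  shows "distr (M1 \<Otimes>\<^sub>M M2) M2 snd = M2"
proof (intro measure_eqI)
  interpret P1: prob_space M1 by fact
  interpret P2: prob_space M2 by fact
  fix A assume A: "A \<in> sets (distr (M1 \<Otimes>\<^sub>M M2) M2 snd)"
  from A have "emeasure (distr (M1 \<Otimes>\<^sub>M M2) M2 snd) A = emeasure (M1 \<Otimes>\<^sub>M M2) (space M1 \<times> A)"
    by (auto simp add: emeasure_distr space_pair_measure dest: sets.sets_into_space intro!: arg_cong2[where f=emeasure])
  with A show "emeasure (distr (M1 \<Otimes>\<^sub>M M2) M2 snd) A = emeasure M2 A"
    by (simp add: P2.emeasure_pair_measure_Times P1.emeasure_space_1)
qed simp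

lemma return_pair:
  assumes "prob_space M" "c \<in> space N1" "f \<in> measurable M N2"
  shows "distr M (N1 \<Otimes>\<^sub>M N2) (\<lambda>x. (c, f x)) = return N1 c \<Otimes>\<^sub>M distr M N2 f"
proof -
  interpret M: prob_space M by fact
  interpret R: prob_space "return N1 c" by (rule prob_space_return) fact
  interpret D: prob_space "distr M N2 f" by (rule M.prob_space_distr) fact
  show ?thesis
  proof (rule pair_measure_eqI[symmetric])
    show "sigma_finite_measure (return N1 c)" by unfold_locales
    show "sigma_finite_measure (distr M N2 f)" by unfold_locales
    show "sets (return N1 c \<Otimes>\<^sub>M distr M N2 f) = sets (distr M (N1 \<Otimes>\<^sub>M N2) (\<lambda>x. (c, f x)))"
      by simp
    fix A B assume A: "A \<in> sets (return N1 c)" and B: "B \<in> sets (distr M N2 f)"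
    have m: "(\<lambda>x. (c, f x)) \<in> measurable M (N1 \<Otimes>\<^sub>M N2)"
      using assms by (intro measurable_Pair) auto
    have "emeasure (distr M (N1 \<Otimes>\<^sub>M N2) (\<lambda>x. (c, f x))) (A \<times> B)
        = emeasure M ((\<lambda>x. (c, f x)) -` (A \<times> B) \<inter> space M)"
      using A B by (intro emeasure_distr[OF m]) auto
    also have "(\<lambda>x. (c, f x)) -` (A \<times> B) \<inter> space M = (if c \<in> A then f -` B \<inter> space M else {})"
      by auto
    also have "emeasure M \<dots> = indicator A c * emeasure M (f -` B \<inter> space M)"
      by (auto simp: indicator_def)
    also have "\<dots> = emeasure (return N1 c) A * emeasure (distr M N2 f) B"
      using A B assms by (simp add: emeasure_distr)
    finally show "emeasure (return N1 c) A * emeasure (distr M N2 f) B = emeasure (distr M (N1 \<Otimes>\<^sub>M N2) (\<lambda>x. (c, f x))) (A \<times> B)" ..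
  qed
qed

lemma pair_assoc:
  assumes "prob_space M1" "prob_space M2" "prob_space M3"
  shows "(M1 \<Otimes>\<^sub>M M2) \<Otimes>\<^sub>M M3 = distr (M1 \<Otimes>\<^sub>M (M2 \<Otimes>\<^sub>M M3)) ((M1 \<Otimes>\<^sub>M M2) \<Otimes>\<^sub>M M3) (\<lambda>(x, (y, z)). ((x, y), z))"
proof -
  interpret P1: prob_space M1 by fact
  interpret P2: prob_space M2 by fact
  interpret P3: prob_space M3 by fact
  interpret P12: pair_prob_space M1 M2 ..
  interpret P23: pair_prob_space M2 M3 ..
  interpret P12_3: pair_prob_space "M1 \<Otimes>\<^sub>M M2" M3 ..
  interpret P1_23: pair_prob_space M1 "M2 \<Otimes>\<^sub>M M3" ..
  let ?f = "\<lambda>(x, (y, z)). ((x, y), z)"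
  have fm[measurable]: "?f \<in> measurable (M1 \<Otimes>\<^sub>M (M2 \<Otimes>\<^sub>M M3)) ((M1 \<Otimes>\<^sub>M M2) \<Otimes>\<^sub>M M3)"
    by (simp add: case_prod_unfold)
  show ?thesis
  proof (rule pair_measure_eqI)
    show "sigma_finite_measure (M1 \<Otimes>\<^sub>M M2)" by unfold_locales
    show "sigma_finite_measure M3" by unfold_locales
    show "sets ((M1 \<Otimes>\<^sub>M M2) \<Otimes>\<^sub>M M3) = sets (distr (M1 \<Otimes>\<^sub>M (M2 \<Otimes>\<^sub>M M3)) ((M1 \<Otimes>\<^sub>M M2) \<Otimes>\<^sub>M M3) ?f)"
      by simp
    fix A C assume A: "A \<in> sets (M1 \<Otimes>\<^sub>M M2)" and C: "C \<in> sets M3"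
    have AC: "A \<times> C \<in> sets ((M1 \<Otimes>\<^sub>M M2) \<Otimes>\<^sub>M M3)" using A C by simp
    have pre: "?f -` (A \<times> C) \<inter> space (M1 \<Otimes>\<^sub>M (M2 \<Otimes>\<^sub>M M3)) \<in> sets (M1 \<Otimes>\<^sub>M (M2 \<Otimes>\<^sub>M M3))"
      using measurable_sets[OF fm AC] .
    have "emeasure (distr (M1 \<Otimes>\<^sub>M (M2 \<Otimes>\<^sub>M M3)) ((M1 \<Otimes>\<^sub>M M2) \<Otimes>\<^sub>M M3) ?f) (A \<times> C)
        = emeasure (M1 \<Otimes>\<^sub>M (M2 \<Otimes>\<^sub>M M3)) (?f -` (A \<times> C) \<inter> space (M1 \<Otimes>\<^sub>M (M2 \<Otimes>\<^sub>M M3)))"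
      by (rule emeasure_distr[OF fm AC])
    also have "\<dots> = (\<integral>\<^sup>+x. emeasure (M2 \<Otimes>\<^sub>M M3) (Pair x -` (?f -` (A \<times> C) \<inter> space (M1 \<Otimes>\<^sub>M (M2 \<Otimes>\<^sub>M M3)))) \<partial>M1)"
      by (rule P23.emeasure_pair_measure_alt[OF pre])
    also have "\<dots> = (\<integral>\<^sup>+x. emeasure M2 (Pair x -` A) * emeasure M3 C \<partial>M1)"
    proof (rule nn_integral_cong)
      fix x assume x: "x \<in> space M1"
      have "Pair x -` (?f -` (A \<times> C) \<inter> space (M1 \<Otimes>\<^sub>M (M2 \<Otimes>\<^sub>M M3))) = (Pair x -` A) \<times> C"
        using x sets.sets_into_space[OF A] sets.sets_into_space[OF C]
        unfolding space_pair_measure by (auto 0 0 simp del: mem_Times_iff) (auto dest!: subsetD)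
      moreover have "Pair x -` A \<in> sets M2" using A by (rule sets_Pair1)
      ultimately show "emeasure (M2 \<Otimes>\<^sub>M M3) (Pair x -` (?f -` (A \<times> C) \<inter> space (M1 \<Otimes>\<^sub>M (M2 \<Otimes>\<^sub>M M3)))) = emeasure M2 (Pair x -` A) * emeasure M3 C"
        using C by (simp add: P3.emeasure_pair_measure_Times)
    qed
    also have "\<dots> = (\<integral>\<^sup>+x. emeasure M2 (Pair x -` A) \<partial>M1) * emeasure M3 C"
      by (rule nn_integral_multc) (rule P2.measurable_emeasure_Pair[OF A])
    also have "\<dots> = emeasure (M1 \<Otimes>\<^sub>M M2) A * emeasure M3 C"
      by (simp add: P2.emeasure_pair_measure_alt[OF A])
    finally show "emeasure (M1 \<Otimes>\<^sub>M M2) A * emeasure M3 C = emeasure (distr (M1 \<Otimes>\<^sub>M (M2 \<Otimes>\<^sub>M M3)) ((M1 \<Otimes>\<^sub>M M2) \<Otimes>\<^sub>M M3) ?f) (A \<times> C)" ..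
  qed
qed

lemma pair_unassoc:
  assumes "prob_space M1" "prob_space M2" "prob_space M3"
  shows "M1 \<Otimes>\<^sub>M (M2 \<Otimes>\<^sub>M M3) = distr ((M1 \<Otimes>\<^sub>M M2) \<Otimes>\<^sub>M M3) (M1 \<Otimes>\<^sub>M (M2 \<Otimes>\<^sub>M M3)) (\<lambda>((x, y), z). (x, (y, z)))"
proof -
  let ?f = "\<lambda>(x, (y, z)). ((x, y), z)" and ?g = "\<lambda>((x, y), z). (x, (y, z))"
  have "distr ((M1 \<Otimes>\<^sub>M M2) \<Otimes>\<^sub>M M3) (M1 \<Otimes>\<^sub>M (M2 \<Otimes>\<^sub>M M3)) ?g
      = distr (distr (M1 \<Otimes>\<^sub>M (M2 \<Otimes>\<^sub>M M3)) ((M1 \<Otimes>\<^sub>M M2) \<Otimes>\<^sub>M M3) ?f) (M1 \<Otimes>\<^sub>M (M2 \<Otimes>\<^sub>M M3)) ?g"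
    by (rule arg_cong[where f="\<lambda>N. distr N (M1 \<Otimes>\<^sub>M (M2 \<Otimes>\<^sub>M M3)) ?g"]) (rule pair_assoc[OF assms])
  also have "\<dots> = distr (M1 \<Otimes>\<^sub>M (M2 \<Otimes>\<^sub>M M3)) (M1 \<Otimes>\<^sub>M (M2 \<Otimes>\<^sub>M M3)) (?g \<circ> ?f)"
    by (rule distr_distr) (simp_all add: case_prod_unfold)
  also have "?g \<circ> ?f = (\<lambda>x. x)" by (simp add: fun_eq_iff case_prod_unfold)
  finally show ?thesis by simp
qed

lemma pair_swap12:
  assumes "prob_space M1" "prob_space M2" "prob_space M3"
  shows "distr (M1 \<Otimes>\<^sub>M (M2 \<Otimes>\<^sub>M M3)) (M2 \<Otimes>\<^sub>M (M1 \<Otimes>\<^sub>M M3)) (\<lambda>(x, (y, z)). (y, (x, z))) = M2 \<Otimes>\<^sub>M (M1 \<Otimes>\<^sub>M M3)"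
proof -
  interpret P1: prob_space M1 by fact
  interpret P2: prob_space M2 by fact
  interpret P3: prob_space M3 by fact
  interpret P13: pair_prob_space M1 M3 ..
  interpret P23: pair_prob_space M2 M3 ..
  interpret P2_13: pair_prob_space M2 "M1 \<Otimes>\<^sub>M M3" ..
  interpret P1_23: pair_prob_space M1 "M2 \<Otimes>\<^sub>M M3" ..
  let ?f = "\<lambda>(x, (y, z)). (y, (x, z))"
  have fm: "?f \<in> measurable (M1 \<Otimes>\<^sub>M (M2 \<Otimes>\<^sub>M M3)) (M2 \<Otimes>\<^sub>M (M1 \<Otimes>\<^sub>M M3))"
    by (simp add: case_prod_unfold)
  show ?thesis
  proof (rule pair_measure_eqI[symmetric])
    show "sigma_finite_measure M2" by unfold_locales
    show "sigma_finite_measure (M1 \<Otimes>\<^sub>M M3)" by unfold_locales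
    show "sets (M2 \<Otimes>\<^sub>M (M1 \<Otimes>\<^sub>M M3)) = sets (distr (M1 \<Otimes>\<^sub>M (M2 \<Otimes>\<^sub>M M3)) (M2 \<Otimes>\<^sub>M (M1 \<Otimes>\<^sub>M M3)) ?f)"
      by simp
    fix B C assume B: "B \<in> sets M2" and C: "C \<in> sets (M1 \<Otimes>\<^sub>M M3)"
    have BC: "B \<times> C \<in> sets (M2 \<Otimes>\<^sub>M (M1 \<Otimes>\<^sub>M M3))" using B C by simp
    have pre: "?f -` (B \<times> C) \<inter> space (M1 \<Otimes>\<^sub>M (M2 \<Otimes>\<^sub>M M3)) \<in> sets (M1 \<Otimes>\<^sub>M (M2 \<Otimes>\<^sub>M M3))"
      using measurable_sets[OF fm BC] .
    have "emeasure (distr (M1 \<Otimes>\<^sub>M (M2 \<Otimes>\<^sub>M M3)) (M2 \<Otimes>\<^sub>M (M1 \<Otimes>\<^sub>M M3)) ?f) (B \<times> C)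
        = emeasure (M1 \<Otimes>\<^sub>M (M2 \<Otimes>\<^sub>M M3)) (?f -` (B \<times> C) \<inter> space (M1 \<Otimes>\<^sub>M (M2 \<Otimes>\<^sub>M M3)))"
      by (rule emeasure_distr[OF fm BC])
    also have "\<dots> = (\<integral>\<^sup>+x. emeasure (M2 \<Otimes>\<^sub>M M3) (Pair x -` (?f -` (B \<times> C) \<inter> space (M1 \<Otimes>\<^sub>M (M2 \<Otimes>\<^sub>M M3)))) \<partial>M1)"
      by (rule P23.emeasure_pair_measure_alt[OF pre])
    also have "\<dots> = (\<integral>\<^sup>+x. emeasure M2 B * emeasure M3 (Pair x -` C) \<partial>M1)"
    proof (rule nn_integral_cong)
      fix x assume x: "x \<in> space M1"
      have "Pair x -` (?f -` (B \<times> C) \<inter> space (M1 \<Otimes>\<^sub>M (M2 \<Otimes>\<^sub>M M3))) = B \<times> (Pair x -` C)"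
        using x sets.sets_into_space[OF B] sets.sets_into_space[OF C]
        unfolding space_pair_measure by (auto 0 0 simp del: mem_Times_iff) (auto dest!: subsetD)
      moreover have "Pair x -` C \<in> sets M3" using C by (rule sets_Pair1)
      ultimately show "emeasure (M2 \<Otimes>\<^sub>M M3) (Pair x -` (?f -` (B \<times> C) \<inter> space (M1 \<Otimes>\<^sub>M (M2 \<Otimes>\<^sub>M M3)))) = emeasure M2 B * emeasure M3 (Pair x -` C)"
        using B by (simp add: P3.emeasure_pair_measure_Times)
    qed
    also have "\<dots> = emeasure M2 B * (\<integral>\<^sup>+x. emeasure M3 (Pair x -` C) \<partial>M1)"
      by (rule nn_integral_cmult) (rule P3.measurable_emeasure_Pair[OF C])
    also have "\<dots> = emeasure M2 B * emeasure (M1 \<Otimes>\<^sub>M M3) C"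
      by (simp add: P3.emeasure_pair_measure_alt[OF C])
    finally show "emeasure M2 B * emeasure (M1 \<Otimes>\<^sub>M M3) C = emeasure (distr (M1 \<Otimes>\<^sub>M (M2 \<Otimes>\<^sub>M M3)) (M2 \<Otimes>\<^sub>M (M1 \<Otimes>\<^sub>M M3)) ?f) (B \<times> C)" ..
  qed
qed

section \<open>Independence of two random elements via their joint law\<close>

lemma indep_rv_imp_distr_pair:
  assumes "prob_space M" and ind: "indep_rv M Ma A Mb B"
  shows "distr M Ma A \<Otimes>\<^sub>M distr M Mb B = distr M (Ma \<Otimes>\<^sub>M Mb) (\<lambda>x. (A x, B x))"
proof -
  interpret prob_space M by fact
  have rvs: "A \<in> measurable M Ma" "B \<in> measurable M Mb" using ind by (auto simp: indep_rv_def)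
  then have AB: "(\<lambda>x. (A x, B x)) \<in> measurable M (Ma \<Otimes>\<^sub>M Mb)" by (rule measurable_Pair)
  interpret LA: prob_space "distr M Ma A" by (rule prob_space_distr) fact
  interpret LB: prob_space "distr M Mb B" by (rule prob_space_distr) fact
  interpret LAB: pair_prob_space "distr M Ma A" "distr M Mb B" ..
  show ?thesis
  proof (rule pair_measure_eqI)
    fix S T assume S: "S \<in> sets (distr M Ma A)" and T: "T \<in> sets (distr M Mb B)"
    have "emeasure (distr M (Ma \<Otimes>\<^sub>M Mb) (\<lambda>x. (A x, B x))) (S \<times> T)
        = emeasure M ((A -` S \<inter> space M) \<inter> (B -` T \<inter> space M))"
      using S T by (subst emeasure_distr[OF AB]) (auto intro!: arg_cong[where f="emeasure M"])
    also have "\<dots> = emeasure M (A -` S \<inter> space M) * emeasure M (B -` T \<inter> space M)"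
    proof -
      have "prob ((A -` S \<inter> space M) \<inter> (B -` T \<inter> space M)) = prob (A -` S \<inter> space M) * prob (B -` T \<inter> space M)"
        by (rule indep_setD[OF ind[unfolded indep_rv_def, THEN conjunct2, THEN conjunct2]]) (use S T in auto)
      then show ?thesis by (simp add: emeasure_eq_measure measure_nonneg ennreal_mult)
    qed
    also have "\<dots> = emeasure (distr M Ma A) S * emeasure (distr M Mb B) T"
      using rvs S T by (simp add: emeasure_distr)
    finally show "emeasure (distr M Ma A) S * emeasure (distr M Mb B) T
        = emeasure (distr M (Ma \<Otimes>\<^sub>M Mb) (\<lambda>x. (A x, B x))) (S \<times> T)" by simp
  qed (simp_all add: LA.sigma_finite_measure_axioms LB.sigma_finite_measure_axioms)
qed

lemma indep_rv_of_distr_pair: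
  assumes "prob_space M" and rvs: "A \<in> measurable M Ma" "B \<in> measurable M Mb"
    and eq: "distr M Ma A \<Otimes>\<^sub>M distr M Mb B = distr M (Ma \<Otimes>\<^sub>M Mb) (\<lambda>x. (A x, B x))"
  shows "indep_rv M Ma A Mb B"
proof -
  interpret prob_space M by fact
  have AB: "(\<lambda>x. (A x, B x)) \<in> measurable M (Ma \<Otimes>\<^sub>M Mb)" using rvs by (rule measurable_Pair)
  interpret LB: prob_space "distr M Mb B" by (rule prob_space_distr) fact
  have "indep_set {A -` S \<inter> space M |S. S \<in> sets Ma} {B -` S \<inter> space M |S. S \<in> sets Mb}"
  proof (rule indep_setI)
    show "{A -` S \<inter> space M |S. S \<in> sets Ma} \<subseteq> events" using rvs by auto
    show "{B -` S \<inter> space M |S. S \<in> sets Mb} \<subseteq> events" using rvs by auto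
    fix a b assume "a \<in> {A -` S \<inter> space M |S. S \<in> sets Ma}" "b \<in> {B -` S \<inter> space M |S. S \<in> sets Mb}"
    then obtain S T where ab: "a = A -` S \<inter> space M" "b = B -` T \<inter> space M" "S \<in> sets Ma" "T \<in> sets Mb"
      by auto
    have "prob (a \<inter> b) = emeasure (distr M (Ma \<Otimes>\<^sub>M Mb) (\<lambda>x. (A x, B x))) (S \<times> T)"
      using AB ab by (auto simp: emeasure_distr emeasure_eq_measure measure_nonneg intro!: arg_cong[where f=prob])
    also have "\<dots> = emeasure (distr M Ma A) S * emeasure (distr M Mb B) T"
      unfolding eq[symmetric] using ab by (simp add: LB.emeasure_pair_measure_Times)
    finally show "prob (a \<inter> b) = prob a * prob b"
      using rvs ab by (simp add: emeasure_eq_measure emeasure_distr measure_nonneg ennreal_mult[symmetric])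
  qed
  then show ?thesis using rvs by (simp add: indep_rv_def)
qed

lemma indep_rv_iff:
  assumes "prob_space M"
  shows "indep_rv M Ma A Mb B \<longleftrightarrow> A \<in> measurable M Ma \<and> B \<in> measurable M Mb \<and>
     distr M Ma A \<Otimes>\<^sub>M distr M Mb B = distr M (Ma \<Otimes>\<^sub>M Mb) (\<lambda>x. (A x, B x))"
proof -
  have "indep_rv M Ma A Mb B \<Longrightarrow> A \<in> measurable M Ma \<and> B \<in> measurable M Mb"
    by (simp add: indep_rv_def)
  then show ?thesis
    using indep_rv_imp_distr_pair[OF assms] indep_rv_of_distr_pair[OF assms] by blast
qed

lemma indep_rv_of_product:
  assumes M: "prob_space M" and A: "A \<in> measurable M Ma" and B: "B \<in> measurable M Mb"
    and P1: "prob_space \<mu>1" and P2: "prob_space \<mu>2" and s1: "sets \<mu>1 = sets Ma" and s2: "sets \<mu>2 = sets Mb"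
    and eq: "distr M (Ma \<Otimes>\<^sub>M Mb) (\<lambda>x. (A x, B x)) = \<mu>1 \<Otimes>\<^sub>M \<mu>2"
  shows "indep_rv M Ma A Mb B"
proof -
  interpret M: prob_space M by fact
  interpret P1: prob_space \<mu>1 by fact
  interpret P2: prob_space \<mu>2 by fact
  have AB: "(\<lambda>x. (A x, B x)) \<in> measurable M (Ma \<Otimes>\<^sub>M Mb)" using A B by simp
  have "distr M Ma A = distr (distr M (Ma \<Otimes>\<^sub>M Mb) (\<lambda>x. (A x, B x))) Ma fst"
    using AB by (subst distr_distr) (auto simp: comp_def)
  also have "\<dots> = distr (\<mu>1 \<Otimes>\<^sub>M \<mu>2) Ma fst" by (simp only: eq)
  also have "\<dots> = distr (\<mu>1 \<Otimes>\<^sub>M \<mu>2) \<mu>1 fst" by (rule distr_cong) (auto simp: s1)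
  also have "\<dots> = \<mu>1" by (rule P2.distr_pair_fst)
  finally have d1: "distr M Ma A = \<mu>1" .
  have "distr M Mb B = distr (distr M (Ma \<Otimes>\<^sub>M Mb) (\<lambda>x. (A x, B x))) Mb snd"
    using AB by (subst distr_distr) (auto simp: comp_def)
  also have "\<dots> = distr (\<mu>1 \<Otimes>\<^sub>M \<mu>2) Mb snd" by (simp only: eq)
  also have "\<dots> = distr (\<mu>1 \<Otimes>\<^sub>M \<mu>2) \<mu>2 snd" by (rule distr_cong) (auto simp: s2)
  also have "\<dots> = \<mu>2" by (rule distr_pair_snd_prob[OF P1 P2])
  finally have d2: "distr M Mb B = \<mu>2" .
  show ?thesis unfolding indep_rv_iff[OF M] using A B eq d1 d2 by simp
qed

lemma indep_rv_eq_law: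
  assumes M: "prob_space M" and N: "prob_space N"
    and A: "A \<in> measurable M Ma" and B: "B \<in> measurable M Mb"
    and law: "distr M (Ma \<Otimes>\<^sub>M Mb) (\<lambda>x. (A x, B x)) = distr N (Ma \<Otimes>\<^sub>M Mb) (\<lambda>x. (A' x, B' x))"
    and ind: "indep_rv N Ma A' Mb B'"
  shows "indep_rv M Ma A Mb B"
proof -
  interpret N: prob_space N by fact
  have A': "A' \<in> measurable N Ma" and B': "B' \<in> measurable N Mb"
    using ind by (auto simp: indep_rv_def)
  show ?thesis
  proof (rule indep_rv_of_product[OF M A B])
    show "prob_space (distr N Ma A')" using A' by (rule N.prob_space_distr)
    show "prob_space (distr N Mb B')" using B' by (rule N.prob_space_distr)
    show "distr M (Ma \<Otimes>\<^sub>M Mb) (\<lambda>x. (A x, B x)) = distr N Ma A' \<Otimes>\<^sub>M distr N Mb B'"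
      using ind unfolding law indep_rv_iff[OF N] by simp
  qed simp_all
qed

lemma indep_var_imp_rv:
  assumes "prob_space M" "prob_space.indep_var M S X T Y"
  shows "indep_rv M S X T Y"
proof -
  interpret prob_space M by fact
  from assms(2)[unfolded indep_var_eq] have rv: "X \<in> measurable M S" "Y \<in> measurable M T"
    and I: "indep_set (sigma_sets (space M) {X -` A \<inter> space M |A. A \<in> sets S}) (sigma_sets (space M) {Y -` A \<inter> space M |A. A \<in> sets T})"
    by auto
  show ?thesis unfolding indep_rv_def
  proof (intro conjI rv)
    show "indep_set {X -` A \<inter> space M |A. A \<in> sets S} {Y -` A \<inter> space M |A. A \<in> sets T}"
      using I unfolding indep_set_def
      by (rule indep_sets_mono_sets) (auto split: bool.split)
  qed
qed

lemma indep_rv_cong: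
  assumes "indep_rv M Ma A Mb B" "\<And>x. x \<in> space M \<Longrightarrow> A x = A' x" "\<And>x. x \<in> space M \<Longrightarrow> B x = B' x"
  shows "indep_rv M Ma A' Mb B'"
proof -
  have e1: "{A -` S \<inter> space M |S. S \<in> sets Ma} = {A' -` S \<inter> space M |S. S \<in> sets Ma}"
    using assms(2) by (auto simp: vimage_def)
  have e2: "{B -` S \<inter> space M |S. S \<in> sets Mb} = {B' -` S \<inter> space M |S. S \<in> sets Mb}"
    using assms(3) by (auto simp: vimage_def)
  have "A' \<in> measurable M Ma" using assms(1,2) by (auto simp: indep_rv_def cong: measurable_cong)
  moreover have "B' \<in> measurable M Mb" using assms(1,3) by (auto simp: indep_rv_def cong: measurable_cong)
  ultimately show ?thesis using assms(1) unfolding indep_rv_def e1 e2 by simp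
qed

lemma preimages_compose_subset:
  assumes A: "A \<in> measurable M Ma" and f: "f \<in> measurable Ma Mc"
  shows "{(\<lambda>x. f (A x)) -` S \<inter> space M |S. S \<in> sets Mc} \<subseteq> {A -` S \<inter> space M |S. S \<in> sets Ma}"
proof clarify
  fix S assume S: "S \<in> sets Mc"
  have "(\<lambda>x. f (A x)) -` S \<inter> space M = A -` (f -` S \<inter> space Ma) \<inter> space M"
    using measurable_space[OF A] by auto
  with measurable_sets[OF f S] show "\<exists>S'. (\<lambda>x. f (A x)) -` S \<inter> space M = A -` S' \<inter> space M \<and> S' \<in> sets Ma"
    by blast
qed

lemma indep_rv_compose:
  assumes "indep_rv M Ma A Mb B" "f \<in> measurable Ma Mc" "g \<in> measurable Mb Md" "prob_space M"
  shows "indep_rv M Mc (\<lambda>x. f (A x)) Md (\<lambda>x. g (B x))"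
proof -
  interpret prob_space M by fact
  have A: "A \<in> measurable M Ma" and B: "B \<in> measurable M Mb"
    and I: "indep_set {A -` S \<inter> space M |S. S \<in> sets Ma} {B -` S \<inter> space M |S. S \<in> sets Mb}"
    using assms(1) by (auto simp: indep_rv_def)
  have "indep_set {(\<lambda>x. f (A x)) -` S \<inter> space M |S. S \<in> sets Mc} {(\<lambda>x. g (B x)) -` S \<inter> space M |S. S \<in> sets Md}"
    using I unfolding indep_set_def
    by (rule indep_sets_mono_sets)
       (use preimages_compose_subset[OF A assms(2)] preimages_compose_subset[OF B assms(3)] in \<open>auto split: bool.split\<close>)
  then show ?thesis using A B assms(2,3) by (simp add: indep_rv_def)
qed

lemma indep_rv_const:
  assumes "prob_space M" "A \<in> measurable M Ma" "B \<in> measurable M Mb" "\<And>x. x \<in> space M \<Longrightarrow> B x = c"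
  shows "indep_rv M Ma A Mb B"
proof -
  interpret prob_space M by fact
  show ?thesis unfolding indep_rv_def
  proof (intro conjI assms indep_setI)
    show "{A -` S \<inter> space M |S. S \<in> sets Ma} \<subseteq> events" using assms(2) by auto
    show "{B -` S \<inter> space M |S. S \<in> sets Mb} \<subseteq> events" using assms(3) by auto
    fix a b assume a: "a \<in> {A -` S \<inter> space M |S. S \<in> sets Ma}" and b: "b \<in> {B -` S \<inter> space M |S. S \<in> sets Mb}"
    from b obtain S where b': "b = B -` S \<inter> space M" by auto
    have "b = {} \<or> b = space M" using assms(4) unfolding b' by (cases "c \<in> S") auto
    then show "prob (a \<inter> b) = prob a * prob b"
    proof
      assume "b = space M"
      moreover have "a \<subseteq> space M" using a by auto
      ultimately show ?thesis by (simp add: Int_absorb2 prob_space)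
    qed simp
  qed
qed

text \<open>If X is independent of the pair (A, B) and A is independent of B, then the three
  variables are mutually independent; in particular A is independent of (X, B).\<close>
lemma indep_rv_regroup:
  assumes M: "prob_space M"
    and XAB: "indep_rv M Mx X (Ma \<Otimes>\<^sub>M Mb) (\<lambda>\<omega>. (A \<omega>, B \<omega>))"
    and AB: "indep_rv M Ma A Mb B"
  shows "indep_rv M Ma A (Mx \<Otimes>\<^sub>M Mb) (\<lambda>\<omega>. (X \<omega>, B \<omega>))"
proof -
  interpret prob_space M by fact
  have X: "X \<in> measurable M Mx" and A: "A \<in> measurable M Ma" and B: "B \<in> measurable M Mb"
    using XAB AB by (auto simp: indep_rv_def)
  define LX LA LB where "LX = distr M Mx X" and "LA = distr M Ma A" and "LB = distr M Mb B"
  interpret LX: prob_space LX unfolding LX_def using X by (rule prob_space_distr)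
  interpret LA: prob_space LA unfolding LA_def using A by (rule prob_space_distr)
  interpret LB: prob_space LB unfolding LB_def using B by (rule prob_space_distr)
  interpret LXB: pair_prob_space LX LB ..
  have joint: "distr M (Mx \<Otimes>\<^sub>M (Ma \<Otimes>\<^sub>M Mb)) (\<lambda>\<omega>. (X \<omega>, (A \<omega>, B \<omega>))) = LX \<Otimes>\<^sub>M (LA \<Otimes>\<^sub>M LB)"
    using XAB AB unfolding indep_rv_iff[OF M] by (simp add: LX_def LA_def LB_def)
  have "distr M (Ma \<Otimes>\<^sub>M (Mx \<Otimes>\<^sub>M Mb)) (\<lambda>\<omega>. (A \<omega>, (X \<omega>, B \<omega>)))
      = distr (distr M (Mx \<Otimes>\<^sub>M (Ma \<Otimes>\<^sub>M Mb)) (\<lambda>\<omega>. (X \<omega>, (A \<omega>, B \<omega>))))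
          (Ma \<Otimes>\<^sub>M (Mx \<Otimes>\<^sub>M Mb)) (\<lambda>(x, (y, z)). (y, (x, z)))"
    using X A B by (subst distr_distr) (auto simp: comp_def case_prod_unfold)
  also have "\<dots> = distr (LX \<Otimes>\<^sub>M (LA \<Otimes>\<^sub>M LB)) (LA \<Otimes>\<^sub>M (LX \<Otimes>\<^sub>M LB)) (\<lambda>(x, (y, z)). (y, (x, z)))"
    unfolding joint by (rule distr_cong) (auto simp: LX_def LA_def LB_def intro!: sets_pair_measure_cong)
  also have "\<dots> = LA \<Otimes>\<^sub>M (LX \<Otimes>\<^sub>M LB)"
    by (rule pair_swap12) (rule LX.prob_space_axioms LA.prob_space_axioms LB.prob_space_axioms)+
  finally show ?thesis
    using X B LA.prob_space_axioms LXB.prob_space_axioms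
    by (intro indep_rv_of_product[OF M A]) (auto simp: LA_def LX_def LB_def intro!: sets_pair_measure_cong)
qed

lemma Int_stable_vimage:
  assumes "Int_stable C"
  shows "Int_stable {f -` E \<inter> \<Omega> |E. E \<in> C}"
proof (rule Int_stableI)
  fix a b assume "a \<in> {f -` E \<inter> \<Omega> |E. E \<in> C}" "b \<in> {f -` E \<inter> \<Omega> |E. E \<in> C}"
  then obtain E1 E2 where "a = f -` E1 \<inter> \<Omega>" "b = f -` E2 \<inter> \<Omega>" "E1 \<in> C" "E2 \<in> C" by auto
  with Int_stableD[OF assms] show "a \<inter> b \<in> {f -` E \<inter> \<Omega> |E. E \<in> C}"
    by (intro CollectI exI[of _ "E1 \<inter> E2"]) auto
qed

text \<open>A process is independent of a random variable as soon as all its finite-dimensional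
  restrictions are: the cylinder sets form an intersection-stable generator of the product
  sigma-algebra, so independence extends from them to the whole sigma-algebra.\<close>
lemma indep_rv_process_of_cylinders:
  assumes "prob_space N"
    and R: "R \<in> measurable N (PiM I Mi)" and B: "B \<in> measurable N Mb"
    and cyl: "\<And>J. finite J \<Longrightarrow> J \<subseteq> I \<Longrightarrow> indep_rv N (PiM J Mi) (\<lambda>\<omega>. restrict (R \<omega>) J) Mb B"
  shows "indep_rv N (PiM I Mi) R Mb B"
proof -
  interpret prob_space N by fact
  define G where "G = {R -` E \<inter> space N |E. E \<in> prod_algebra I Mi}"
  define H where "H = {B -` C \<inter> space N |C. C \<in> sets Mb}"
  have "indep_set G H"
  proof (rule indep_setI)
    show "G \<subseteq> events"
      unfolding G_def using R by (auto simp: sets_PiM intro!: measurable_sets sigma_sets.Basic)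
    show "H \<subseteq> events" unfolding H_def using B by auto
    fix a b assume "a \<in> G" "b \<in> H"
    then obtain E C where a: "a = R -` E \<inter> space N" and E: "E \<in> prod_algebra I Mi"
      and b: "b = B -` C \<inter> space N" and C: "C \<in> sets Mb"
      unfolding G_def H_def by auto
    from E obtain J F where EJ: "E = prod_emb I Mi J (\<Pi>\<^sub>E j\<in>J. F j)"
      and J: "finite J" "J \<subseteq> I" and F: "\<And>j. j \<in> J \<Longrightarrow> F j \<in> sets (Mi j)"
      by (rule prod_algebraE) auto
    have "a = (\<lambda>\<omega>. restrict (R \<omega>) J) -` (\<Pi>\<^sub>E j\<in>J. F j) \<inter> space N"
      using measurable_space[OF R] J(2) unfolding a EJ prod_emb_def
      by (auto simp: space_PiM PiE_def Pi_def)
    moreover have "(\<Pi>\<^sub>E j\<in>J. F j) \<in> sets (PiM J Mi)"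
      using J F by (intro sets_PiM_I_finite) auto
    ultimately show "prob (a \<inter> b) = prob a * prob b"
      using cyl[OF J] C unfolding indep_rv_def b by (auto intro!: indep_setD)
  qed
  moreover have "Int_stable G"
    unfolding G_def by (rule Int_stable_vimage[OF Int_stable_prod_algebra])
  moreover have "Int_stable H"
    unfolding H_def by (rule Int_stable_vimage[OF sets.Int_stable])
  ultimately have indep_sigma: "indep_set (sigma_sets (space N) G) (sigma_sets (space N) H)"
    by (rule indep_set_sigma_sets)
  have sigma_G: "sigma_sets (space N) G = {R -` E \<inter> space N |E. E \<in> sets (PiM I Mi)}"
  proof -
    have "R \<in> space N \<rightarrow> space (PiM I Mi)" using R by (auto dest: measurable_space)
    from sigma_sets_vimage_commute[OF this, of "prod_algebra I Mi"] show ?thesis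
      unfolding G_def by (simp add: sets_PiM space_PiM)
  qed
  have "indep_set {R -` E \<inter> space N |E. E \<in> sets (PiM I Mi)} {B -` C \<inter> space N |C. C \<in> sets Mb}"
    using indep_sigma unfolding indep_set_def sigma_G
    by (rule indep_sets_mono_sets) (auto split: bool.split simp: H_def intro: sigma_sets.Basic)
  then show ?thesis unfolding indep_rv_def using R B by auto
qed

section \<open>Gamma and beta distributions\<close>

definition gamma_density :: "real \<Rightarrow> real \<Rightarrow> real" where
  "gamma_density c x = indicator {0<..} x * x powr (c - 1) * exp (- x) / Gamma c"

definition gamma_distr :: "real \<Rightarrow> real measure" where
  "gamma_distr c = density lborel (\<lambda>x. ennreal (gamma_density c x))"

lemma gamma_density_nonneg: "c > 0 \<Longrightarrow> gamma_density c x \<ge> 0"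
  by (auto simp: gamma_density_def indicator_def intro!: divide_nonneg_pos Gamma_real_pos)

lemma gamma_density_measurable[measurable]: "gamma_density c \<in> borel_measurable borel"
  unfolding gamma_density_def by measurable

lemma space_gamma_distr[simp]: "space (gamma_distr c) = UNIV" and sets_gamma_distr[simp, measurable_cong]: "sets (gamma_distr c) = sets borel"
  by (auto simp: gamma_distr_def)

text \<open>The gamma density integrates to 1 by the integral representation of the Gamma function.\<close>
lemma prob_space_gamma_distr: assumes "c > 0" shows "prob_space (gamma_distr c)"
proof
  have "Gamma c = (\<integral>\<^sup>+ t. ennreal (indicator {0..} t * t powr (c - 1) / exp t) \<partial>lborel)"
    by (rule Gamma_conv_nn_integral_real[OF assms])
  also have "\<dots> = (\<integral>\<^sup>+ t. ennreal (Gamma c) * ennreal (gamma_density c t) \<partial>lborel)"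
    using Gamma_real_pos[OF assms]
    by (intro nn_integral_cong) (auto simp: gamma_density_def indicator_def ennreal_mult'[symmetric] exp_minus field_simps)
  also have "\<dots> = ennreal (Gamma c) * (\<integral>\<^sup>+ t. ennreal (gamma_density c t) \<partial>lborel)"
    by (rule nn_integral_cmult) measurable
  finally have "(\<integral>\<^sup>+ t. ennreal (gamma_density c t) \<partial>lborel) = 1"
    using Gamma_real_pos[OF assms]
    using ennreal_mult_cancel_left[of "ennreal (Gamma c)" "\<integral>\<^sup>+ t. ennreal (gamma_density c t) \<partial>lborel" 1] by auto
  then show "emeasure (gamma_distr c) (space (gamma_distr c)) = 1"
    by (simp add: gamma_distr_def emeasure_density)
qed

lemma AE_gamma_distr_pos: "AE x in gamma_distr c. x > 0"
  unfolding gamma_distr_def by (subst AE_density) (auto simp: gamma_density_def indicator_def)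

lemma distr_id_gamma_distr: "distr (gamma_distr c) borel (\<lambda>x. x) = gamma_distr c"
proof -
  have "distr (gamma_distr c) borel (\<lambda>x. x) = distr (gamma_distr c) (gamma_distr c) (\<lambda>x. x)"
    by (rule distr_cong) auto
  then show ?thesis by simp
qed

lemma distributed_gamma_distr:
  assumes "distributed N lborel Y (\<lambda>x. ennreal (gamma_density c x))"
  shows "distr N borel Y = gamma_distr c"
  using distributed_distr_eq_density[OF assms] by (simp add: distr_def gamma_distr_def)

definition beta_density :: "real \<Rightarrow> real \<Rightarrow> real \<Rightarrow> real" where
  "beta_density a b x = indicator {0<..<1} x * x powr (a - 1) * (1 - x) powr (b - 1) * Gamma (a + b) / (Gamma a * Gamma b)"

lemma beta_density_measurable[measurable]: "beta_density a b \<in> borel_measurable borel"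
  unfolding beta_density_def by measurable

lemma beta_density_nonneg: "a > 0 \<Longrightarrow> b > 0 \<Longrightarrow> beta_density a b x \<ge> 0"
  by (auto simp: beta_density_def indicator_def intro!: divide_nonneg_pos mult_nonneg_nonneg mult_pos_pos Gamma_real_pos less_imp_le)

definition beta_distr :: "real \<Rightarrow> real \<Rightarrow> real measure" where
  "beta_distr a b = density lborel (\<lambda>x. ennreal (beta_density a b x))"

lemma space_beta_distr[simp]: "space (beta_distr a b) = UNIV" and sets_beta_distr[simp, measurable_cong]: "sets (beta_distr a b) = sets borel"
  by (auto simp: beta_distr_def)

section \<open>Lukacs' theorem for two gamma variables\<close>

lemma beta_gamma_density_factor:
  assumes a: "a > 0" and b: "b > 0" and u: "u > 0"
  shows "u * (gamma_density a (u * x) * gamma_density b (u - u * x)) = beta_density a b x * gamma_density (a + b) u"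
proof (cases "0 < x \<and> x < 1")
  case True
  have ux: "u * x > 0" "u - u * x > 0" using True u by (auto simp: algebra_simps)
  have e: "exp (- (u * x)) * exp (- (u - u * x)) = exp (- u)"
    by (simp add: exp_add[symmetric])
  have p1: "(u * x) powr (a - 1) = u powr (a - 1) * x powr (a - 1)"
    using u True by (simp add: powr_mult)
  have p2: "(u - u * x) powr (b - 1) = u powr (b - 1) * (1 - x) powr (b - 1)"
    using u True by (simp add: powr_mult[symmetric] algebra_simps)
  have p3: "u * (u powr (a - 1) * u powr (b - 1)) = u powr (a + b - 1)"
  proof -
    have "u powr 1 * (u powr (a - 1) * u powr (b - 1)) = u powr (1 + ((a - 1) + (b - 1)))"
      by (simp only: powr_add)
    also have "1 + ((a - 1) + (b - 1)) = a + b - 1" by simp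
    finally show ?thesis using u by simp
  qed
  have Gp: "Gamma a > 0" "Gamma b > 0" "Gamma (a + b) > 0" using a b by (auto intro!: Gamma_real_pos)
  show ?thesis
    using ux True u Gp unfolding gamma_density_def beta_density_def
    apply (simp add: indicator_def p1 p2)
    apply (subst p3[symmetric])
    apply (simp add: field_simps e[symmetric])
    done
next
  case False
  then have "x \<le> 0 \<or> x \<ge> 1" by auto
  then have "u * x \<le> 0 \<or> u - u * x \<le> 0" using u
    by (auto simp: mult_nonneg_nonpos algebra_simps mult_le_cancel_left1)
  then show ?thesis using False unfolding gamma_density_def beta_density_def by (auto simp: indicator_def)
qed

lemma gamma_convolution_fibre:
  fixes k :: "real \<Rightarrow> ennreal"
  assumes a: "a > 0" and b: "b > 0" and k[measurable]: "k \<in> borel_measurable borel"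
  shows "(\<integral>\<^sup>+t. ennreal (gamma_density a t * gamma_density b (u - t)) * k (t / u) \<partial>lborel)
    = ennreal (gamma_density (a + b) u) * (\<integral>\<^sup>+x. ennreal (beta_density a b x) * k x \<partial>lborel)"
proof (cases "u > 0")
  case False
  have "gamma_density a t * gamma_density b (u - t) = 0" for t
    using False by (auto simp: gamma_density_def indicator_def)
  then have z: "(\<lambda>t. ennreal (gamma_density a t * gamma_density b (u - t)) * k (t / u)) = (\<lambda>t. 0)"
    by (intro ext) (simp only: ennreal_0 mult_zero_left)
  moreover have "gamma_density (a + b) u = 0" using False by (auto simp: gamma_density_def indicator_def)
  ultimately show ?thesis by (simp only: z) simp
next
  case True
  have "(\<integral>\<^sup>+t. ennreal (gamma_density a t * gamma_density b (u - t)) * k (t / u) \<partial>lborel)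
      = ennreal \<bar>u\<bar> * (\<integral>\<^sup>+x. ennreal (gamma_density a (0 + u * x) * gamma_density b (u - (0 + u * x))) * k ((0 + u * x) / u) \<partial>lborel)"
    using True by (intro nn_integral_real_affine) auto
  also have "\<dots> = (\<integral>\<^sup>+x. ennreal u * (ennreal (gamma_density a (u * x) * gamma_density b (u - u * x)) * k x) \<partial>lborel)"
    using True by (subst nn_integral_cmult) auto
  also have "\<dots> = (\<integral>\<^sup>+x. ennreal (gamma_density (a + b) u) * (ennreal (beta_density a b x) * k x) \<partial>lborel)"
  proof (rule nn_integral_cong)
    fix x
    have "ennreal u * (ennreal (gamma_density a (u * x) * gamma_density b (u - u * x)) * k x)
        = ennreal (u * (gamma_density a (u * x) * gamma_density b (u - u * x))) * k x"
      using True a b by (simp add: ennreal_mult' mult.assoc gamma_density_nonneg)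
    also have "\<dots> = ennreal (beta_density a b x * gamma_density (a + b) u) * k x"
      by (simp add: beta_gamma_density_factor[OF a b True])
    also have "\<dots> = ennreal (gamma_density (a + b) u) * (ennreal (beta_density a b x) * k x)"
      using a b by (simp add: ennreal_mult' gamma_density_nonneg beta_density_nonneg mult_ac)
    finally show "ennreal u * (ennreal (gamma_density a (u * x) * gamma_density b (u - u * x)) * k x)
        = ennreal (gamma_density (a + b) u) * (ennreal (beta_density a b x) * k x)" .
  qed
  also have "\<dots> = ennreal (gamma_density (a + b) u) * (\<integral>\<^sup>+x. ennreal (beta_density a b x) * k x \<partial>lborel)"
    by (subst nn_integral_cmult) auto
  finally show ?thesis .
qed

text \<open>Change of variables (t, z) \<mapsto> (t/(t+z), t+z) in the integral against the product of two
  gamma densities: first shift z to u = t + z, swap the order of integration, then use the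
  fibre identity.\<close>
lemma beta_gamma_substitution:
  fixes h :: "real \<Rightarrow> real \<Rightarrow> ennreal"
  assumes a: "a > 0" and b: "b > 0" and h[measurable]: "case_prod h \<in> borel_measurable (borel \<Otimes>\<^sub>M borel)"
  shows "(\<integral>\<^sup>+t. \<integral>\<^sup>+u. ennreal (gamma_density a t * gamma_density b u) * h (t / (t + u)) (t + u) \<partial>lborel \<partial>lborel)
       = (\<integral>\<^sup>+u. ennreal (gamma_density (a + b) u) * (\<integral>\<^sup>+x. ennreal (beta_density a b x) * h x u \<partial>lborel) \<partial>lborel)"
proof -
  have hm[measurable]: "(\<lambda>p. h (f p) (g p)) \<in> borel_measurable M"
    if [measurable]: "f \<in> borel_measurable M" "g \<in> borel_measurable M" for f g and M :: "'z measure"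
  proof -
    have "(\<lambda>p. (f p, g p)) \<in> measurable M (borel \<Otimes>\<^sub>M borel)" by measurable
    from measurable_compose[OF this h] show ?thesis by simp
  qed
  have "(\<integral>\<^sup>+t. \<integral>\<^sup>+u. ennreal (gamma_density a t * gamma_density b u) * h (t / (t + u)) (t + u) \<partial>lborel \<partial>lborel)
      = (\<integral>\<^sup>+t. \<integral>\<^sup>+u. ennreal (gamma_density a t * gamma_density b (u - t)) * h (t / u) u \<partial>lborel \<partial>lborel)"
  proof (rule nn_integral_cong)
    fix t :: real
    have "(\<integral>\<^sup>+u. ennreal (gamma_density a t * gamma_density b u) * h (t / (t + u)) (t + u) \<partial>lborel)
        = (\<integral>\<^sup>+u. ennreal (gamma_density a t * gamma_density b u) * h (t / (t + u)) (t + u) \<partial>distr lborel borel ((+) (-t)))"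
      by (simp add: lborel_distr_plus)
    also have "\<dots> = (\<integral>\<^sup>+u. ennreal (gamma_density a t * gamma_density b (u - t)) * h (t / u) u \<partial>lborel)"
      by (subst nn_integral_distr) auto
    finally show "(\<integral>\<^sup>+u. ennreal (gamma_density a t * gamma_density b u) * h (t / (t + u)) (t + u) \<partial>lborel)
        = (\<integral>\<^sup>+u. ennreal (gamma_density a t * gamma_density b (u - t)) * h (t / u) u \<partial>lborel)" .
  qed
  also have "\<dots> = (\<integral>\<^sup>+u. \<integral>\<^sup>+t. ennreal (gamma_density a t * gamma_density b (u - t)) * h (t / u) u \<partial>lborel \<partial>lborel)"
    by (subst lborel_pair.Fubini') (auto simp: case_prod_unfold)
  also have "\<dots> = (\<integral>\<^sup>+u. ennreal (gamma_density (a + b) u) * (\<integral>\<^sup>+x. ennreal (beta_density a b x) * h x u \<partial>lborel) \<partial>lborel)"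
    by (intro nn_integral_cong gamma_convolution_fibre[OF a b]) measurable
  finally show ?thesis .
qed

lemma emeasure_gamma_pair:
  assumes a: "a > 0" and b: "b > 0" and X[measurable]: "X \<in> sets (borel \<Otimes>\<^sub>M borel)"
  shows "emeasure (gamma_distr a \<Otimes>\<^sub>M gamma_distr b) X = (\<integral>\<^sup>+t. \<integral>\<^sup>+u. ennreal (gamma_density a t * gamma_density b u) * indicator X (t, u) \<partial>lborel \<partial>lborel)"
proof -
  interpret Gb: prob_space "gamma_distr b" by (rule prob_space_gamma_distr[OF b])
  have X': "X \<in> sets (gamma_distr a \<Otimes>\<^sub>M gamma_distr b)" by simp
  have "emeasure (gamma_distr a \<Otimes>\<^sub>M gamma_distr b) X = (\<integral>\<^sup>+t. emeasure (gamma_distr b) (Pair t -` X) \<partial>gamma_distr a)"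
    by (rule Gb.emeasure_pair_measure_alt[OF X'])
  also have "\<dots> = (\<integral>\<^sup>+t. \<integral>\<^sup>+u. indicator X (t, u) \<partial>gamma_distr b \<partial>gamma_distr a)"
  proof (intro nn_integral_cong)
    fix t
    have "Pair t -` X \<in> sets (gamma_distr b)" by simp
    then have "emeasure (gamma_distr b) (Pair t -` X) = (\<integral>\<^sup>+u. indicator (Pair t -` X) u \<partial>gamma_distr b)"
      by simp
    also have "\<dots> = (\<integral>\<^sup>+u. indicator X (t, u) \<partial>gamma_distr b)"
      by (intro nn_integral_cong) (simp add: indicator_def)
    finally show "emeasure (gamma_distr b) (Pair t -` X) = (\<integral>\<^sup>+u. indicator X (t, u) \<partial>gamma_distr b)" .
  qed
  also have "\<dots> = (\<integral>\<^sup>+t. ennreal (gamma_density a t) * \<integral>\<^sup>+u. ennreal (gamma_density b u) * indicator X (t, u) \<partial>lborel \<partial>lborel)"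
    unfolding gamma_distr_def by (subst nn_integral_density; simp add: nn_integral_density)+
  also have "\<dots> = (\<integral>\<^sup>+t. \<integral>\<^sup>+u. ennreal (gamma_density a t * gamma_density b u) * indicator X (t, u) \<partial>lborel \<partial>lborel)"
    using a b by (intro nn_integral_cong) (simp add: nn_integral_cmult[symmetric] ennreal_mult' gamma_density_nonneg mult.assoc)
  finally show ?thesis .
qed

lemma lukacs_two_rectangle:
  assumes a: "a > 0" and b: "b > 0" and A[measurable]: "A \<in> sets borel" and B[measurable]: "B \<in> sets borel"
  shows "emeasure (distr (gamma_distr a \<Otimes>\<^sub>M gamma_distr b) (borel \<Otimes>\<^sub>M borel) (\<lambda>p. (fst p / (fst p + snd p), fst p + snd p))) (A \<times> B)
      = (\<integral>\<^sup>+x. ennreal (beta_density a b x) * indicator A x \<partial>lborel) * (\<integral>\<^sup>+u. ennreal (gamma_density (a + b) u) * indicator B u \<partial>lborel)"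
proof -
  let ?F = "\<lambda>p::real\<times>real. (fst p / (fst p + snd p), fst p + snd p)"
  have Fm[measurable]: "?F \<in> measurable (gamma_distr a \<Otimes>\<^sub>M gamma_distr b) (borel \<Otimes>\<^sub>M borel)"
    by (simp add: measurable_cong_sets[OF sets_pair_measure_cong[OF sets_gamma_distr sets_gamma_distr] refl])
  have "emeasure (distr (gamma_distr a \<Otimes>\<^sub>M gamma_distr b) (borel \<Otimes>\<^sub>M borel) ?F) (A \<times> B)
      = emeasure (gamma_distr a \<Otimes>\<^sub>M gamma_distr b) (?F -` (A \<times> B) \<inter> space (gamma_distr a \<Otimes>\<^sub>M gamma_distr b))"
    by (rule emeasure_distr[OF Fm]) simp
  also have "?F -` (A \<times> B) \<inter> space (gamma_distr a \<Otimes>\<^sub>M gamma_distr b) = ?F -` (A \<times> B)"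
    by (simp add: space_pair_measure)
  also have "emeasure (gamma_distr a \<Otimes>\<^sub>M gamma_distr b) (?F -` (A \<times> B))
     = (\<integral>\<^sup>+t. \<integral>\<^sup>+u. ennreal (gamma_density a t * gamma_density b u) * indicator (?F -` (A \<times> B)) (t, u) \<partial>lborel \<partial>lborel)"
  proof (rule emeasure_gamma_pair[OF a b])
    have "?F \<in> measurable (borel \<Otimes>\<^sub>M borel) (borel \<Otimes>\<^sub>M borel)" by measurable
    from measurable_sets[OF this, of "A \<times> B"] show "?F -` (A \<times> B) \<in> sets (borel \<Otimes>\<^sub>M borel)"
      by (simp add: space_pair_measure)
  qed
  also have "\<dots> = (\<integral>\<^sup>+t. \<integral>\<^sup>+u. ennreal (gamma_density a t * gamma_density b u) * (\<lambda>x w. indicator A x * indicator B w) (t / (t + u)) (t + u) \<partial>lborel \<partial>lborel)"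
    by (intro nn_integral_cong) (simp add: indicator_def)
  also have "\<dots> = (\<integral>\<^sup>+u. ennreal (gamma_density (a + b) u) * (\<integral>\<^sup>+x. ennreal (beta_density a b x) * (\<lambda>x w. indicator A x * indicator B w) x u \<partial>lborel) \<partial>lborel)"
    by (rule beta_gamma_substitution[OF a b]) measurable
  also have "\<dots> = (\<integral>\<^sup>+u. (ennreal (gamma_density (a + b) u) * indicator B u) * (\<integral>\<^sup>+x. ennreal (beta_density a b x) * indicator A x \<partial>lborel) \<partial>lborel)"
  proof (intro nn_integral_cong)
    fix u
    have "(\<integral>\<^sup>+x. ennreal (beta_density a b x) * (indicator A x * indicator B u) \<partial>lborel)
         = indicator B u * (\<integral>\<^sup>+x. ennreal (beta_density a b x) * indicator A x \<partial>lborel)"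
      by (subst nn_integral_cmult[symmetric]) (auto intro!: nn_integral_cong simp: mult_ac)
    then show "ennreal (gamma_density (a + b) u) * (\<integral>\<^sup>+x. ennreal (beta_density a b x) * (\<lambda>x w. indicator A x * indicator B w) x u \<partial>lborel)
         = (ennreal (gamma_density (a + b) u) * indicator B u) * (\<integral>\<^sup>+x. ennreal (beta_density a b x) * indicator A x \<partial>lborel)"
      by (simp add: mult_ac)
  qed
  also have "\<dots> = (\<integral>\<^sup>+x. ennreal (beta_density a b x) * indicator A x \<partial>lborel) * (\<integral>\<^sup>+u. ennreal (gamma_density (a + b) u) * indicator B u \<partial>lborel)"
    by (subst nn_integral_multc) (auto simp: mult_ac)
  finally show ?thesis .
qed

lemma emeasure_beta_distr:
  "A \<in> sets borel \<Longrightarrow> emeasure (beta_distr a b) A = (\<integral>\<^sup>+x. ennreal (beta_density a b x) * indicator A x \<partial>lborel)"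
  by (simp add: beta_distr_def emeasure_density)

lemma emeasure_gamma_distr:
  "B \<in> sets borel \<Longrightarrow> emeasure (gamma_distr c) B = (\<integral>\<^sup>+u. ennreal (gamma_density c u) * indicator B u \<partial>lborel)"
  by (simp add: gamma_distr_def emeasure_density)

text \<open>The beta density integrates to 1, as the rectangle formula for the whole plane shows.\<close>
lemma prob_space_beta_distr:
  assumes a: "a > 0" and b: "b > 0"
  shows "prob_space (beta_distr a b)"
proof (rule prob_spaceI)
  let ?F = "\<lambda>p::real\<times>real. (fst p / (fst p + snd p), fst p + snd p)"
  interpret Ga: prob_space "gamma_distr a" by (rule prob_space_gamma_distr[OF a])
  interpret Gb: prob_space "gamma_distr b" by (rule prob_space_gamma_distr[OF b])
  interpret Gab: prob_space "gamma_distr (a + b)" using a b by (intro prob_space_gamma_distr) simp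
  interpret G2: pair_prob_space "gamma_distr a" "gamma_distr b" ..
  interpret D: prob_space "distr (gamma_distr a \<Otimes>\<^sub>M gamma_distr b) (borel \<Otimes>\<^sub>M borel) ?F"
    by (rule G2.prob_space_distr)
       (simp add: measurable_cong_sets[OF sets_pair_measure_cong[OF sets_gamma_distr sets_gamma_distr] refl])
  have "emeasure (beta_distr a b) UNIV = emeasure (distr (gamma_distr a \<Otimes>\<^sub>M gamma_distr b) (borel \<Otimes>\<^sub>M borel) ?F) (UNIV \<times> UNIV)"
    using lukacs_two_rectangle[OF a b, of UNIV UNIV] emeasure_beta_distr[of UNIV]
      emeasure_gamma_distr[of UNIV "a + b"] Gab.emeasure_space_1 by simp
  also have "\<dots> = 1" using D.emeasure_space_1 by (simp add: space_pair_measure)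
  finally show "emeasure (beta_distr a b) (space (beta_distr a b)) = 1" by simp
qed

lemma lukacs_two:
  assumes a: "a > 0" and b: "b > 0"
  shows "distr (gamma_distr a \<Otimes>\<^sub>M gamma_distr b) (borel \<Otimes>\<^sub>M borel) (\<lambda>p. (fst p / (fst p + snd p), fst p + snd p))
       = beta_distr a b \<Otimes>\<^sub>M gamma_distr (a + b)"
proof (rule pair_measure_eqI[symmetric])
  interpret B: prob_space "beta_distr a b" by (rule prob_space_beta_distr[OF a b])
  interpret Gab: prob_space "gamma_distr (a + b)" using a b by (intro prob_space_gamma_distr) simp
  show "sigma_finite_measure (beta_distr a b)" by unfold_locales
  show "sigma_finite_measure (gamma_distr (a + b))" by unfold_locales
  fix A B assume "A \<in> sets (beta_distr a b)" "B \<in> sets (gamma_distr (a + b))"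
  then show "emeasure (beta_distr a b) A * emeasure (gamma_distr (a + b)) B
      = emeasure (distr (gamma_distr a \<Otimes>\<^sub>M gamma_distr b) (borel \<Otimes>\<^sub>M borel)
          (\<lambda>p. (fst p / (fst p + snd p), fst p + snd p))) (A \<times> B)"
    using lukacs_two_rectangle[OF a b] emeasure_beta_distr emeasure_gamma_distr by simp
qed (simp add: sets_pair_measure_cong[OF sets_beta_distr sets_gamma_distr])

lemma lukacs_two_paired:
  assumes nu: "prob_space \<nu>" and nus[measurable_cong]: "sets \<nu> = sets Mq" and a: "a > 0" and b: "b > 0"
  shows "distr (\<nu> \<Otimes>\<^sub>M (gamma_distr a \<Otimes>\<^sub>M gamma_distr b)) (Mq \<Otimes>\<^sub>M (borel \<Otimes>\<^sub>M borel))
      (\<lambda>(q, p). (q, (fst p / (fst p + snd p), fst p + snd p)))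
    = \<nu> \<Otimes>\<^sub>M (beta_distr a b \<Otimes>\<^sub>M gamma_distr (a + b))"
proof -
  interpret PN: prob_space \<nu> by (rule nu)
  interpret B: prob_space "beta_distr a b" by (rule prob_space_beta_distr[OF a b])
  interpret G': prob_space "gamma_distr (a + b)" using a b by (intro prob_space_gamma_distr) auto
  interpret BG: pair_prob_space "beta_distr a b" "gamma_distr (a + b)" ..
  have "\<nu> \<Otimes>\<^sub>M (beta_distr a b \<Otimes>\<^sub>M gamma_distr (a + b))
      = distr \<nu> Mq (\<lambda>x. x) \<Otimes>\<^sub>M distr (gamma_distr a \<Otimes>\<^sub>M gamma_distr b) (borel \<Otimes>\<^sub>M borel) (\<lambda>p. (fst p / (fst p + snd p), fst p + snd p))"
  proof -
    have "distr \<nu> Mq (\<lambda>x. x) = distr \<nu> \<nu> (\<lambda>x. x)" by (rule distr_cong) (auto simp: nus)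
    then show ?thesis by (simp add: lukacs_two[OF a b])
  qed
  also have "\<dots> = distr (\<nu> \<Otimes>\<^sub>M (gamma_distr a \<Otimes>\<^sub>M gamma_distr b)) (Mq \<Otimes>\<^sub>M (borel \<Otimes>\<^sub>M borel)) (\<lambda>(x, y). (x, (fst y / (fst y + snd y), fst y + snd y)))"
    by (rule pair_measure_distr) (auto simp: lukacs_two[OF a b] intro: BG.sigma_finite_measure_axioms)
  finally show ?thesis by simp
qed

lemma lukacs_with_parameter:
  fixes f :: "'q \<times> real \<Rightarrow> 'r"
  assumes nu: "prob_space \<nu>" and nus[measurable_cong]: "sets \<nu> = sets Mq"
    and a: "a > 0" and b: "b > 0" and f[measurable]: "f \<in> measurable (Mq \<Otimes>\<^sub>M borel) Mf"
  shows "distr ((\<nu> \<Otimes>\<^sub>M gamma_distr a) \<Otimes>\<^sub>M gamma_distr b) (Mf \<Otimes>\<^sub>M borel)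
      (\<lambda>((q, s), z). (f (q, s / (s + z)), s + z))
    = distr (\<nu> \<Otimes>\<^sub>M beta_distr a b) Mf f \<Otimes>\<^sub>M gamma_distr (a + b)"
proof -
  interpret PN: prob_space \<nu> by (rule nu)
  interpret GA: prob_space "gamma_distr a" by (rule prob_space_gamma_distr[OF a])
  interpret G: prob_space "gamma_distr b" by (rule prob_space_gamma_distr[OF b])
  interpret G': prob_space "gamma_distr (a + b)" using a b by (intro prob_space_gamma_distr) auto
  interpret B: prob_space "beta_distr a b" by (rule prob_space_beta_distr[OF a b])
  interpret NB: pair_prob_space \<nu> "beta_distr a b" ..
  define regroup where "regroup = (\<lambda>((q::'q, s::real), z::real). (f (q, s / (s + z)), s + z))"
  define assoc where "assoc = (\<lambda>(x::'q, (y::real, z::real)). ((x, y), z))"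
  define unassoc where "unassoc = (\<lambda>((x::'q, y::real), z::real). (x, (y, z)))"
  define lukacs_map where "lukacs_map = (\<lambda>(q::'q, p::real\<times>real). (q, (fst p / (fst p + snd p), fst p + snd p)))"
  define apply_f where "apply_f = (\<lambda>(q::'q, (w::real, t::real)). (f (q, w), t))"
  interpret GAG: pair_prob_space "gamma_distr a" "gamma_distr b" ..
  have regroup_m: "regroup \<in> measurable ((Mq \<Otimes>\<^sub>M borel) \<Otimes>\<^sub>M borel) (Mf \<Otimes>\<^sub>M borel)"
    unfolding regroup_def case_prod_unfold by measurable
  have assoc_m: "assoc \<in> measurable (\<nu> \<Otimes>\<^sub>M (gamma_distr a \<Otimes>\<^sub>M gamma_distr b)) ((\<nu> \<Otimes>\<^sub>M gamma_distr a) \<Otimes>\<^sub>M gamma_distr b)"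
    unfolding assoc_def case_prod_unfold by measurable
  have unassoc_m: "unassoc \<in> measurable ((\<nu> \<Otimes>\<^sub>M beta_distr a b) \<Otimes>\<^sub>M gamma_distr (a + b)) (\<nu> \<Otimes>\<^sub>M (beta_distr a b \<Otimes>\<^sub>M gamma_distr (a + b)))"
    unfolding unassoc_def case_prod_unfold by measurable
  have lukacs_map_m: "lukacs_map \<in> measurable (\<nu> \<Otimes>\<^sub>M (gamma_distr a \<Otimes>\<^sub>M gamma_distr b)) (Mq \<Otimes>\<^sub>M (borel \<Otimes>\<^sub>M borel))"
    unfolding lukacs_map_def case_prod_unfold by measurable
  have apply_f_m: "apply_f \<in> measurable (Mq \<Otimes>\<^sub>M (borel \<Otimes>\<^sub>M borel)) (Mf \<Otimes>\<^sub>M borel)"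
    unfolding apply_f_def case_prod_unfold by measurable
  have "(\<nu> \<Otimes>\<^sub>M gamma_distr a) \<Otimes>\<^sub>M gamma_distr b = distr (\<nu> \<Otimes>\<^sub>M (gamma_distr a \<Otimes>\<^sub>M gamma_distr b)) ((\<nu> \<Otimes>\<^sub>M gamma_distr a) \<Otimes>\<^sub>M gamma_distr b) assoc"
    unfolding assoc_def by (rule pair_assoc) (rule nu, unfold_locales)
  then have "distr ((\<nu> \<Otimes>\<^sub>M gamma_distr a) \<Otimes>\<^sub>M gamma_distr b) (Mf \<Otimes>\<^sub>M borel) regroup
      = distr (distr (\<nu> \<Otimes>\<^sub>M (gamma_distr a \<Otimes>\<^sub>M gamma_distr b)) ((\<nu> \<Otimes>\<^sub>M gamma_distr a) \<Otimes>\<^sub>M gamma_distr b) assoc) (Mf \<Otimes>\<^sub>M borel) regroup"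
    by (rule arg_cong[where f="\<lambda>N. distr N (Mf \<Otimes>\<^sub>M borel) regroup"])
  also have "\<dots> = distr (\<nu> \<Otimes>\<^sub>M (gamma_distr a \<Otimes>\<^sub>M gamma_distr b)) (Mf \<Otimes>\<^sub>M borel) (regroup \<circ> assoc)"
    by (rule distr_distr) (use regroup_m in \<open>simp add: measurable_cong_sets[OF sets_pair_measure_cong[OF sets_pair_measure_cong[OF nus sets_gamma_distr] sets_gamma_distr] refl]\<close>, rule assoc_m)
  also have "\<dots> = distr (\<nu> \<Otimes>\<^sub>M (gamma_distr a \<Otimes>\<^sub>M gamma_distr b)) (Mf \<Otimes>\<^sub>M borel) (apply_f \<circ> lukacs_map)"
    by (rule distr_cong) (auto simp: regroup_def assoc_def apply_f_def lukacs_map_def)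
  also have "\<dots> = distr (distr (\<nu> \<Otimes>\<^sub>M (gamma_distr a \<Otimes>\<^sub>M gamma_distr b)) (Mq \<Otimes>\<^sub>M (borel \<Otimes>\<^sub>M borel)) lukacs_map) (Mf \<Otimes>\<^sub>M borel) apply_f"
    by (rule distr_distr[symmetric, OF apply_f_m lukacs_map_m])
  also have "\<dots> = distr (\<nu> \<Otimes>\<^sub>M (beta_distr a b \<Otimes>\<^sub>M gamma_distr (a + b))) (Mf \<Otimes>\<^sub>M borel) apply_f"
    by (simp only: lukacs_two_paired[OF nu nus a b, folded lukacs_map_def])
  also have "\<nu> \<Otimes>\<^sub>M (beta_distr a b \<Otimes>\<^sub>M gamma_distr (a + b)) = distr ((\<nu> \<Otimes>\<^sub>M beta_distr a b) \<Otimes>\<^sub>M gamma_distr (a + b)) (\<nu> \<Otimes>\<^sub>M (beta_distr a b \<Otimes>\<^sub>M gamma_distr (a + b))) unassoc"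
    unfolding unassoc_def by (rule pair_unassoc) (rule nu, unfold_locales)
  also have "distr (distr ((\<nu> \<Otimes>\<^sub>M beta_distr a b) \<Otimes>\<^sub>M gamma_distr (a + b)) (\<nu> \<Otimes>\<^sub>M (beta_distr a b \<Otimes>\<^sub>M gamma_distr (a + b))) unassoc) (Mf \<Otimes>\<^sub>M borel) apply_f
      = distr ((\<nu> \<Otimes>\<^sub>M beta_distr a b) \<Otimes>\<^sub>M gamma_distr (a + b)) (Mf \<Otimes>\<^sub>M borel) (apply_f \<circ> unassoc)"
    by (rule distr_distr) (use apply_f_m in \<open>simp add: measurable_cong_sets[OF sets_pair_measure_cong[OF nus sets_pair_measure_cong[OF sets_beta_distr sets_gamma_distr]] refl]\<close>, rule unassoc_m)
  also have "\<dots> = distr ((\<nu> \<Otimes>\<^sub>M beta_distr a b) \<Otimes>\<^sub>M gamma_distr (a + b)) (Mf \<Otimes>\<^sub>M borel) (\<lambda>(x, y). (f x, (\<lambda>x. x) y))"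
    by (rule distr_cong) (auto simp: apply_f_def unassoc_def)
  also have "\<dots> = distr (\<nu> \<Otimes>\<^sub>M beta_distr a b) Mf f \<Otimes>\<^sub>M distr (gamma_distr (a + b)) borel (\<lambda>x. x)"
    by (rule pair_measure_distr[symmetric]) (auto simp: distr_id_gamma_distr intro: G'.sigma_finite_measure_axioms)
  finally show ?thesis unfolding regroup_def by (simp add: distr_id_gamma_distr)
qed

section \<open>Proportions of independent gamma variables are independent of their sum\<close>

definition coord_sum :: "nat \<Rightarrow> (nat \<Rightarrow> real) \<Rightarrow> real" where
  "coord_sum n y = (\<Sum>i<n. y i)"

definition proportions :: "nat \<Rightarrow> (nat \<Rightarrow> real) \<Rightarrow> (nat \<Rightarrow> real)" where
  "proportions n y = (\<lambda>j\<in>{..<n}. y j / coord_sum n y)"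

abbreviation vec_borel :: "nat \<Rightarrow> (nat \<Rightarrow> real) measure" where
  "vec_borel n \<equiv> PiM {..<n} (\<lambda>_. borel)"

abbreviation gamma_vec :: "(nat \<Rightarrow> real) \<Rightarrow> nat \<Rightarrow> (nat \<Rightarrow> real) measure" where
  "gamma_vec a n \<equiv> PiM {..<n} (\<lambda>i. gamma_distr (a i))"

lemma sets_gamma_vec: "sets (gamma_vec a n) = sets (vec_borel n)"
  by (intro sets_PiM_cong) auto

lemma coord_sum_measurable[measurable]: "coord_sum n \<in> borel_measurable (vec_borel n)"
  unfolding coord_sum_def by measurable

lemma proportions_measurable[measurable]: "proportions n \<in> measurable (vec_borel n) (vec_borel n)"
  unfolding proportions_def by measurable

lemma AE_gamma_vec_pos:
  assumes "\<forall>i. a i > 0"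
  shows "AE y in gamma_vec a n. \<forall>i\<in>{..<n}. y i > 0"
proof (rule AE_finite_allI)
  fix i assume "i \<in> {..<n}"
  then show "AE y in gamma_vec a n. y i > 0"
    using assms by (intro AE_PiM_component prob_space_gamma_distr AE_gamma_distr_pos) auto
qed simp

lemma product_sigma_finite_gamma: "\<forall>i. a i > 0 \<Longrightarrow> product_sigma_finite (\<lambda>i. gamma_distr (a i))"
proof -
  assume "\<forall>i. a i > 0"
  then have "prob_space (gamma_distr (a i))" for i by (intro prob_space_gamma_distr) auto
  then show ?thesis unfolding product_sigma_finite_def
    by (auto intro: prob_space_imp_sigma_finite)
qed

lemma dirichlet_base:
  assumes a: "\<forall>i. a i > 0"
  shows "distr (gamma_vec a 1) (vec_borel 1 \<Otimes>\<^sub>M borel) (\<lambda>y. (proportions 1 y, coord_sum 1 y)) = return (vec_borel 1) (\<lambda>j\<in>{..<1}. 1) \<Otimes>\<^sub>M gamma_distr (a 0)"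
proof -
  interpret psf: product_sigma_finite "\<lambda>i. gamma_distr (a i)" using product_sigma_finite_gamma[OF a] .
  interpret P: prob_space "gamma_vec a 1" by (rule prob_space_PiM) (use a prob_space_gamma_distr in auto)
  have "distr (gamma_vec a 1) (vec_borel 1 \<Otimes>\<^sub>M borel) (\<lambda>y. (proportions 1 y, coord_sum 1 y)) = distr (gamma_vec a 1) (vec_borel 1 \<Otimes>\<^sub>M borel) (\<lambda>y. ((\<lambda>j\<in>{..<1}. 1), y 0))"
  proof (rule distr_cong_AE)
    show "AE y in gamma_vec a 1. (proportions 1 y, coord_sum 1 y) = ((\<lambda>j\<in>{..<1}. 1), y 0)"
      using AE_gamma_vec_pos[OF a, of 1]
      by eventually_elim (auto simp: proportions_def coord_sum_def fun_eq_iff lessThan_Suc)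
    show "(\<lambda>y. (proportions 1 y, coord_sum 1 y)) \<in> measurable (gamma_vec a 1) (vec_borel 1 \<Otimes>\<^sub>M borel)"
      by (simp add: measurable_cong_sets[OF sets_gamma_vec refl])
    show "(\<lambda>y. ((\<lambda>j\<in>{..<1}. 1::real), y 0)) \<in> measurable (gamma_vec a 1) (vec_borel 1 \<Otimes>\<^sub>M borel)"
      by (simp add: measurable_cong_sets[OF sets_gamma_vec refl])
  qed simp_all
  also have "\<dots> = return (vec_borel 1) (\<lambda>j\<in>{..<1}. 1) \<Otimes>\<^sub>M distr (gamma_vec a 1) borel (\<lambda>y. y 0)"
    by (rule return_pair[OF P.prob_space_axioms]) (auto simp: measurable_cong_sets[OF sets_gamma_vec refl] space_PiM)
  also have "distr (gamma_vec a 1) borel (\<lambda>y. y 0) = gamma_distr (a 0)"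
  proof -
    have "distr (gamma_vec a 1) borel (\<lambda>y. y 0) = distr (PiM {0} (\<lambda>i. gamma_distr (a i))) (gamma_distr (a 0)) (\<lambda>y. y 0)"
      by (rule distr_cong) (auto simp: lessThan_Suc)
    then show ?thesis using psf.distr_singleton[of 0] by simp
  qed
  finally show ?thesis .
qed

definition refine :: "nat \<Rightarrow> (nat \<Rightarrow> real) \<times> real \<Rightarrow> (nat \<Rightarrow> real)" where
  "refine n p = (\<lambda>j\<in>{..<Suc n}. if j < n then fst p j * snd p else 1 - snd p)"

lemma refine_measurable[measurable]: "refine n \<in> measurable (vec_borel n \<Otimes>\<^sub>M borel) (vec_borel (Suc n))"
  unfolding refine_def
proof (rule measurable_restrict)
  fix j assume "j \<in> {..<Suc n}"
  show "(\<lambda>p. if j < n then fst p j * snd p else 1 - snd p) \<in> borel_measurable (vec_borel n \<Otimes>\<^sub>M borel)"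
    by (cases "j < n") auto
qed

definition snoc_coord :: "nat \<Rightarrow> (nat \<Rightarrow> real) \<times> real \<Rightarrow> (nat \<Rightarrow> real)" where
  "snoc_coord n p = merge {..<n} {n} (fst p, \<lambda>i\<in>{n}. snd p)"

lemma snoc_coord_measurable[measurable]: "snoc_coord n \<in> measurable (vec_borel n \<Otimes>\<^sub>M borel) (vec_borel (Suc n))"
proof -
  have "(\<lambda>p. (fst p, \<lambda>i\<in>{n}. snd p)) \<in> measurable (vec_borel n \<Otimes>\<^sub>M borel) (vec_borel n \<Otimes>\<^sub>M PiM {n} (\<lambda>_. borel))"
    by measurable
  from measurable_compose[OF this measurable_merge]
  have "(\<lambda>p. merge {..<n} {n} (fst p, \<lambda>i\<in>{n}. snd p)) \<in> measurable (vec_borel n \<Otimes>\<^sub>M borel) (PiM ({..<n} \<union> {n}) (\<lambda>_. borel))" .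
  moreover have "{..<n} \<union> {n} = {..<Suc n}" by auto
  ultimately show ?thesis unfolding snoc_coord_def by simp
qed

lemma snoc_coord_apply: "snoc_coord n p i = (if i < n then fst p i else if i = n then snd p else undefined)"
  by (auto simp: snoc_coord_def merge_def)

lemma gamma_vec_Suc:
  assumes a: "\<forall>i. a i > 0"
  shows "gamma_vec a (Suc n) = distr (gamma_vec a n \<Otimes>\<^sub>M gamma_distr (a n)) (gamma_vec a (Suc n)) (snoc_coord n)"
proof -
  interpret psf: product_sigma_finite "\<lambda>i. gamma_distr (a i)" using product_sigma_finite_gamma[OF a] .
  interpret S1: finite_product_sigma_finite "\<lambda>i. gamma_distr (a i)" "{n}" by standard simp
  interpret Sn: finite_product_sigma_finite "\<lambda>i. gamma_distr (a i)" "{..<n}" by standard simp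
  have "gamma_vec a n \<Otimes>\<^sub>M PiM {n} (\<lambda>i. gamma_distr (a i)) = distr (gamma_vec a n) (gamma_vec a n) (\<lambda>x. x) \<Otimes>\<^sub>M distr (gamma_distr (a n)) (PiM {n} (\<lambda>i. gamma_distr (a i))) (\<lambda>x. \<lambda>i\<in>{n}. x)"
    by (simp add: psf.distr_component)
  also have "\<dots> = distr (gamma_vec a n \<Otimes>\<^sub>M gamma_distr (a n)) (gamma_vec a n \<Otimes>\<^sub>M PiM {n} (\<lambda>i. gamma_distr (a i))) (\<lambda>(x, y). (x, \<lambda>i\<in>{n}. y))"
    by (rule pair_measure_distr) (auto simp: psf.distr_component intro: S1.sigma_finite_measure_axioms)
  finally have singleton_factor: "gamma_vec a n \<Otimes>\<^sub>M PiM {n} (\<lambda>i. gamma_distr (a i)) = \<dots>" .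
  have "gamma_vec a (Suc n) = PiM ({..<n} \<union> {n}) (\<lambda>i. gamma_distr (a i))"
    by (rule arg_cong[where f="\<lambda>I. PiM I (\<lambda>i. gamma_distr (a i))"]) auto
  also have "\<dots> = distr (gamma_vec a n \<Otimes>\<^sub>M PiM {n} (\<lambda>i. gamma_distr (a i))) (PiM ({..<n} \<union> {n}) (\<lambda>i. gamma_distr (a i))) (merge {..<n} {n})"
    by (rule psf.distr_merge[symmetric]) auto
  also have "\<dots> = distr (distr (gamma_vec a n \<Otimes>\<^sub>M gamma_distr (a n)) (gamma_vec a n \<Otimes>\<^sub>M PiM {n} (\<lambda>i. gamma_distr (a i))) (\<lambda>(x, y). (x, \<lambda>i\<in>{n}. y))) (PiM ({..<n} \<union> {n}) (\<lambda>i. gamma_distr (a i))) (merge {..<n} {n})"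
    by (rule arg_cong[where f="\<lambda>N. distr N (PiM ({..<n} \<union> {n}) (\<lambda>i. gamma_distr (a i))) (merge {..<n} {n})"]) (rule singleton_factor)
  also have "\<dots> = distr (gamma_vec a n \<Otimes>\<^sub>M gamma_distr (a n)) (PiM ({..<n} \<union> {n}) (\<lambda>i. gamma_distr (a i))) (merge {..<n} {n} \<circ> (\<lambda>(x, y). (x, \<lambda>i\<in>{n}. y)))"
  proof (rule distr_distr[OF measurable_merge])
    show "(\<lambda>(x, y). (x, \<lambda>i\<in>{n}. y)) \<in> measurable (gamma_vec a n \<Otimes>\<^sub>M gamma_distr (a n)) (gamma_vec a n \<Otimes>\<^sub>M PiM {n} (\<lambda>i. gamma_distr (a i)))"
      unfolding case_prod_unfold by measurable
  qed
  also have "\<dots> = distr (gamma_vec a n \<Otimes>\<^sub>M gamma_distr (a n)) (gamma_vec a (Suc n)) (snoc_coord n)"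
  proof (rule distr_cong)
    show "sets (PiM ({..<n} \<union> {n}) (\<lambda>i. gamma_distr (a i))) = sets (gamma_vec a (Suc n))"
      by (rule arg_cong[where f="\<lambda>I. sets (PiM I (\<lambda>i. gamma_distr (a i)))"]) auto
  qed (simp_all add: snoc_coord_def case_prod_unfold)
  finally show ?thesis .
qed

lemma proportions_sum_snoc:
  assumes n: "n \<ge> 1" and y: "\<forall>i<n. y i > 0" and z: "z > 0"
  shows "(proportions (Suc n) (snoc_coord n (y, z)), coord_sum (Suc n) (snoc_coord n (y, z)))
    = (refine n (proportions n y, coord_sum n y / (coord_sum n y + z)), coord_sum n y + z)"
proof -
  define S where "S = coord_sum n y"
  have S: "S > 0" unfolding S_def coord_sum_def using y n by (intro sum_pos) (auto simp: lessThan_empty_iff)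
  have total_snoc: "coord_sum (Suc n) (snoc_coord n (y, z)) = S + z"
    by (simp add: S_def coord_sum_def snoc_coord_apply)
  have scale: "x / (S + z) = x / S * (S / (S + z))" for x
    using S by simp
  have share: "z / (S + z) = 1 - S / (S + z)"
    using S z by (simp add: field_simps)
  show ?thesis
    unfolding total_snoc S_def[symmetric] proportions_def refine_def
    using S by (auto simp: fun_eq_iff snoc_coord_apply scale[symmetric] share[symmetric] S_def[symmetric])
qed

lemma gamma_vec_Suc_proportions:
  assumes a: "\<forall>i. a i > 0" and n: "n \<ge> 1"
  shows "distr (gamma_vec a (Suc n)) (vec_borel (Suc n) \<Otimes>\<^sub>M borel) (\<lambda>y. (proportions (Suc n) y, coord_sum (Suc n) y))
    = distr (gamma_vec a n \<Otimes>\<^sub>M gamma_distr (a n)) (vec_borel (Suc n) \<Otimes>\<^sub>M borel)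
        (\<lambda>p. (refine n (proportions n (fst p), coord_sum n (fst p) / (coord_sum n (fst p) + snd p)), coord_sum n (fst p) + snd p))"
proof -
  note sets_gamma_vec[measurable_cong]
  interpret Mn: prob_space "gamma_vec a n" by (rule prob_space_PiM) (use a prob_space_gamma_distr in auto)
  interpret G: prob_space "gamma_distr (a n)" using a by (intro prob_space_gamma_distr) auto
  interpret MnG: pair_prob_space "gamma_vec a n" "gamma_distr (a n)" ..
  define F where "F = (\<lambda>y. (proportions (Suc n) y, coord_sum (Suc n) y))"
  define H where "H = (\<lambda>p. (refine n (proportions n (fst p), coord_sum n (fst p) / (coord_sum n (fst p) + snd p)), coord_sum n (fst p) + snd p))"
  have Fm[measurable]: "F \<in> measurable (vec_borel (Suc n)) (vec_borel (Suc n) \<Otimes>\<^sub>M borel)"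
    unfolding F_def by measurable
  have snoc_m: "snoc_coord n \<in> measurable (gamma_vec a n \<Otimes>\<^sub>M gamma_distr (a n)) (gamma_vec a (Suc n))"
    by (simp add: measurable_cong_sets[OF sets_pair_measure_cong[OF sets_gamma_vec sets_gamma_distr] sets_gamma_vec])
  have gamma_vec_snoc: "gamma_vec a (Suc n) = distr (gamma_vec a n \<Otimes>\<^sub>M gamma_distr (a n)) (gamma_vec a (Suc n)) (snoc_coord n)"
    by (rule gamma_vec_Suc[OF a])
  have "distr (gamma_vec a (Suc n)) (vec_borel (Suc n) \<Otimes>\<^sub>M borel) F
      = distr (distr (gamma_vec a n \<Otimes>\<^sub>M gamma_distr (a n)) (gamma_vec a (Suc n)) (snoc_coord n)) (vec_borel (Suc n) \<Otimes>\<^sub>M borel) F"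
    by (rule arg_cong[where f="\<lambda>N. distr N (vec_borel (Suc n) \<Otimes>\<^sub>M borel) F"]) (rule gamma_vec_snoc)
  also have "\<dots> = distr (gamma_vec a n \<Otimes>\<^sub>M gamma_distr (a n)) (vec_borel (Suc n) \<Otimes>\<^sub>M borel) (F \<circ> snoc_coord n)"
    by (rule distr_distr[OF _ snoc_m]) (simp add: measurable_cong_sets[OF sets_gamma_vec refl])
  also have "\<dots> = distr (gamma_vec a n \<Otimes>\<^sub>M gamma_distr (a n)) (vec_borel (Suc n) \<Otimes>\<^sub>M borel) H"
  proof (rule distr_cong_AE)
    have "AE y in gamma_vec a (Suc n). \<forall>i\<in>{..<Suc n}. y i > 0" by (rule AE_gamma_vec_pos[OF a])
    then have "AE y in distr (gamma_vec a n \<Otimes>\<^sub>M gamma_distr (a n)) (gamma_vec a (Suc n)) (snoc_coord n). \<forall>i\<in>{..<Suc n}. y i > 0"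
      by (subst (asm) gamma_vec_snoc)
    from AE_distrD[OF snoc_m this]
    show "AE p in gamma_vec a n \<Otimes>\<^sub>M gamma_distr (a n). (F \<circ> snoc_coord n) p = H p"
    proof (rule eventually_mono)
      fix p :: "(nat \<Rightarrow> real) \<times> real"
      assume pos: "\<forall>i\<in>{..<Suc n}. snoc_coord n p i > 0"
      have "\<forall>i<n. fst p i > 0"
      proof (intro allI impI)
        fix i assume "i < n"
        then show "fst p i > 0" using pos[rule_format, of i] by (simp add: snoc_coord_apply)
      qed
      moreover have "snd p > 0"
        using pos[rule_format, of n] by (simp add: snoc_coord_apply)
      ultimately show "(F \<circ> snoc_coord n) p = H p"
        using proportions_sum_snoc[OF n, of "fst p" "snd p"] by (simp add: F_def H_def)
    qed
    show "F \<circ> snoc_coord n \<in> measurable (gamma_vec a n \<Otimes>\<^sub>M gamma_distr (a n)) (vec_borel (Suc n) \<Otimes>\<^sub>M borel)"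
      using snoc_m by (simp add: measurable_cong_sets[OF refl sets_gamma_vec, symmetric])
    show "H \<in> measurable (gamma_vec a n \<Otimes>\<^sub>M gamma_distr (a n)) (vec_borel (Suc n) \<Otimes>\<^sub>M borel)"
      unfolding H_def by measurable
  qed simp_all
  finally show ?thesis unfolding F_def H_def .
qed

lemma dirichlet_step:
  assumes a: "\<forall>i. a i > 0" and n: "n \<ge> 1"
    and nu: "prob_space \<nu>" and nus[measurable_cong]: "sets \<nu> = sets (vec_borel n)"
    and IH: "distr (gamma_vec a n) (vec_borel n \<Otimes>\<^sub>M borel) (\<lambda>y. (proportions n y, coord_sum n y)) = \<nu> \<Otimes>\<^sub>M gamma_distr (\<Sum>i<n. a i)"
  shows "distr (gamma_vec a (Suc n)) (vec_borel (Suc n) \<Otimes>\<^sub>M borel) (\<lambda>y. (proportions (Suc n) y, coord_sum (Suc n) y))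
       = distr (\<nu> \<Otimes>\<^sub>M beta_distr (\<Sum>i<n. a i) (a n)) (vec_borel (Suc n)) (refine n) \<Otimes>\<^sub>M gamma_distr (\<Sum>i<Suc n. a i)"
proof -
  note sets_gamma_vec[measurable_cong]
  define A where "A = (\<Sum>i<n. a i)"
  have A: "A > 0" unfolding A_def using a n by (intro sum_pos) (auto simp: lessThan_empty_iff)
  have an: "a n > 0" using a by auto
  interpret G: prob_space "gamma_distr (a n)" by (rule prob_space_gamma_distr[OF an])
  define H where "H = (\<lambda>p. (refine n (proportions n (fst p), coord_sum n (fst p) / (coord_sum n (fst p) + snd p)), coord_sum n (fst p) + snd p))"
  have "distr (gamma_vec a (Suc n)) (vec_borel (Suc n) \<Otimes>\<^sub>M borel) (\<lambda>y. (proportions (Suc n) y, coord_sum (Suc n) y))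
      = distr (gamma_vec a n \<Otimes>\<^sub>M gamma_distr (a n)) (vec_borel (Suc n) \<Otimes>\<^sub>M borel) H"
    unfolding H_def by (rule gamma_vec_Suc_proportions[OF a n])
  also have "\<dots> = distr ((\<nu> \<Otimes>\<^sub>M gamma_distr A) \<Otimes>\<^sub>M gamma_distr (a n)) (vec_borel (Suc n) \<Otimes>\<^sub>M borel) (\<lambda>((q, s), z). (refine n (q, s / (s + z)), s + z))"
  proof -
    define lift where "lift = (\<lambda>(y::nat\<Rightarrow>real, z::real). ((proportions n y, coord_sum n y), z))"
    define regroup where "regroup = (\<lambda>((q::nat\<Rightarrow>real, s::real), z::real). (refine n (q, s / (s + z)), s + z))"
    have lift_m: "lift \<in> measurable (gamma_vec a n \<Otimes>\<^sub>M gamma_distr (a n)) ((vec_borel n \<Otimes>\<^sub>M borel) \<Otimes>\<^sub>M borel)"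
      unfolding lift_def case_prod_unfold by measurable
    have regroup_m: "regroup \<in> measurable ((vec_borel n \<Otimes>\<^sub>M borel) \<Otimes>\<^sub>M borel) (vec_borel (Suc n) \<Otimes>\<^sub>M borel)"
      unfolding regroup_def case_prod_unfold by measurable
    have lift_law: "distr (gamma_vec a n \<Otimes>\<^sub>M gamma_distr (a n)) ((vec_borel n \<Otimes>\<^sub>M borel) \<Otimes>\<^sub>M borel) lift = (\<nu> \<Otimes>\<^sub>M gamma_distr A) \<Otimes>\<^sub>M gamma_distr (a n)"
    proof -
      have "(\<nu> \<Otimes>\<^sub>M gamma_distr A) \<Otimes>\<^sub>M gamma_distr (a n) = distr (gamma_vec a n) (vec_borel n \<Otimes>\<^sub>M borel) (\<lambda>y. (proportions n y, coord_sum n y)) \<Otimes>\<^sub>M distr (gamma_distr (a n)) borel (\<lambda>x. x)"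
        by (simp add: IH A_def distr_id_gamma_distr)
      also have "\<dots> = distr (gamma_vec a n \<Otimes>\<^sub>M gamma_distr (a n)) ((vec_borel n \<Otimes>\<^sub>M borel) \<Otimes>\<^sub>M borel) (\<lambda>(x, y). ((proportions n x, coord_sum n x), y))"
        by (rule pair_measure_distr) (auto simp: distr_id_gamma_distr measurable_cong_sets[OF sets_gamma_vec refl] intro: G.sigma_finite_measure_axioms)
      finally show ?thesis unfolding lift_def by simp
    qed
    have "distr (gamma_vec a n \<Otimes>\<^sub>M gamma_distr (a n)) (vec_borel (Suc n) \<Otimes>\<^sub>M borel) H
        = distr (gamma_vec a n \<Otimes>\<^sub>M gamma_distr (a n)) (vec_borel (Suc n) \<Otimes>\<^sub>M borel) (regroup \<circ> lift)"
      by (rule distr_cong) (auto simp: H_def regroup_def lift_def)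
    also have "\<dots> = distr (distr (gamma_vec a n \<Otimes>\<^sub>M gamma_distr (a n)) ((vec_borel n \<Otimes>\<^sub>M borel) \<Otimes>\<^sub>M borel) lift) (vec_borel (Suc n) \<Otimes>\<^sub>M borel) regroup"
      by (rule distr_distr[symmetric, OF regroup_m lift_m])
    also have "\<dots> = distr ((\<nu> \<Otimes>\<^sub>M gamma_distr A) \<Otimes>\<^sub>M gamma_distr (a n)) (vec_borel (Suc n) \<Otimes>\<^sub>M borel) regroup"
      by (simp only: lift_law)
    finally show ?thesis unfolding regroup_def .
  qed
  also have "\<dots> = distr (\<nu> \<Otimes>\<^sub>M beta_distr A (a n)) (vec_borel (Suc n)) (refine n) \<Otimes>\<^sub>M gamma_distr (A + a n)"
    by (rule lukacs_with_parameter[OF nu nus A an]) measurable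
  finally show ?thesis unfolding A_def by simp
qed

text \<open>The proportions of n \<ge> 1 independent gamma variables are independent of their sum, which is
  gamma distributed with shape the sum of the shapes (the proportions are in fact Dirichlet).\<close>
lemma dirichlet_total_indep:
  assumes a: "\<forall>i. a i > 0" and n: "n \<ge> 1"
  shows "\<exists>\<nu>. prob_space \<nu> \<and> sets \<nu> = sets (vec_borel n) \<and>
    distr (gamma_vec a n) (vec_borel n \<Otimes>\<^sub>M borel) (\<lambda>y. (proportions n y, coord_sum n y)) = \<nu> \<Otimes>\<^sub>M gamma_distr (\<Sum>i<n. a i)"
  using n
proof (induction n rule: dec_induct)
  case base
  show ?case
  proof (intro exI conjI)
    show "prob_space (return (vec_borel 1) (\<lambda>j\<in>{..<1}. 1::real))"
      by (rule prob_space_return) (auto simp: space_PiM)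
    show "sets (return (vec_borel 1) (\<lambda>j\<in>{..<1}. 1::real)) = sets (vec_borel 1)" by simp
    show "distr (gamma_vec a 1) (vec_borel 1 \<Otimes>\<^sub>M borel) (\<lambda>y. (proportions 1 y, coord_sum 1 y)) = return (vec_borel 1) (\<lambda>j\<in>{..<1}. 1) \<Otimes>\<^sub>M gamma_distr (\<Sum>i<1. a i)"
      using dirichlet_base[OF a] by simp
  qed
next
  case (step n)
  then obtain \<nu> where nu: "prob_space \<nu>" "sets \<nu> = sets (vec_borel n)"
    "distr (gamma_vec a n) (vec_borel n \<Otimes>\<^sub>M borel) (\<lambda>y. (proportions n y, coord_sum n y)) = \<nu> \<Otimes>\<^sub>M gamma_distr (\<Sum>i<n. a i)" by blast
  have A: "(\<Sum>i<n. a i) > 0" using a step(1) by (intro sum_pos) (auto simp: lessThan_empty_iff)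
  have an: "a n > 0" using a by auto
  interpret PN: prob_space \<nu> by (rule nu)
  interpret B: prob_space "beta_distr (\<Sum>i<n. a i) (a n)" by (rule prob_space_beta_distr[OF A an])
  interpret NB: pair_prob_space \<nu> "beta_distr (\<Sum>i<n. a i) (a n)" ..
  show ?case
  proof (intro exI conjI)
    show "prob_space (distr (\<nu> \<Otimes>\<^sub>M beta_distr (\<Sum>i<n. a i) (a n)) (vec_borel (Suc n)) (refine n))"
      by (rule NB.prob_space_distr) (simp add: measurable_cong_sets[OF sets_pair_measure_cong[OF nu(2) sets_beta_distr] refl])
    show "sets (distr (\<nu> \<Otimes>\<^sub>M beta_distr (\<Sum>i<n. a i) (a n)) (vec_borel (Suc n)) (refine n)) = sets (vec_borel (Suc n))" by simp
    show "distr (gamma_vec a (Suc n)) (vec_borel (Suc n) \<Otimes>\<^sub>M borel) (\<lambda>y. (proportions (Suc n) y, coord_sum (Suc n) y)) =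
      distr (\<nu> \<Otimes>\<^sub>M beta_distr (\<Sum>i<n. a i) (a n)) (vec_borel (Suc n)) (refine n) \<Otimes>\<^sub>M gamma_distr (\<Sum>i<Suc n. a i)"
      by (rule dirichlet_step[OF a step(1) nu])
  qed
qed

section \<open>Gamma processes\<close>

lemma gamma_process_prob: "gamma_process N g m \<Longrightarrow> prob_space N"
  by (simp add: gamma_process_def)

lemma gamma_process_measurable: "gamma_process N g m \<Longrightarrow> t \<ge> 0 \<Longrightarrow> g t \<in> borel_measurable N"
  by (simp add: gamma_process_def)

lemma gamma_process_zero: "gamma_process N g m \<Longrightarrow> \<omega> \<in> space N \<Longrightarrow> g 0 \<omega> = 0"
  by (simp add: gamma_process_def)

lemma gamma_process_indep: "gamma_process N g m \<Longrightarrow> 0 \<le> ts 0 \<Longrightarrow> (\<forall>i<n. ts i < ts (Suc i)) \<Longrightarrow>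
   prob_space.indep_vars N (\<lambda>_. borel) (\<lambda>i \<omega>. g (ts (Suc i)) \<omega> - g (ts i) \<omega>) {..<n}"
  by (simp add: gamma_process_def)

lemma gamma_process_distributed: "gamma_process N g m \<Longrightarrow> 0 \<le> s \<Longrightarrow> s < t \<Longrightarrow>
   distributed N lborel (\<lambda>\<omega>. g t \<omega> - g s \<omega>) (\<lambda>x. ennreal (gamma_density (m * (t - s)) x))"
  by (simp add: gamma_process_def gamma_density_def)

lemma gamma_process_increment_law: "gamma_process N g m \<Longrightarrow> 0 \<le> s \<Longrightarrow> s < t \<Longrightarrow>
   distr N borel (\<lambda>\<omega>. g t \<omega> - g s \<omega>) = gamma_distr (m * (t - s))"
  by (rule distributed_gamma_distr[OF gamma_process_distributed])

lemma gamma_process_AE_pos: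
  assumes gp: "gamma_process N g m" and m: "m > 0" and a: "0 \<le> a" and ab: "a < b"
  shows "AE \<omega> in N. g b \<omega> - g a \<omega> > 0"
proof -
  have D: "(\<lambda>\<omega>. g b \<omega> - g a \<omega>) \<in> borel_measurable N"
    using gamma_process_measurable[OF gp] a ab by auto
  have "AE x in distr N borel (\<lambda>\<omega>. g b \<omega> - g a \<omega>). x > 0"
    by (subst gamma_process_increment_law[OF gp a ab]) (rule AE_gamma_distr_pos)
  from AE_distrD[OF D this] show ?thesis .
qed

lemma gamma_process_shift:
  assumes gp: "gamma_process N g m" and s: "s \<ge> 0"
  shows "gamma_process N (\<lambda>u \<omega>. g (u + s) \<omega> - g s \<omega>) m"
  unfolding gamma_process_def
proof (intro conjI allI impI ballI)
  show "prob_space N" by (rule gamma_process_prob[OF gp])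
  fix t :: real assume "0 \<le> t"
  then show "(\<lambda>\<omega>. g (t + s) \<omega> - g s \<omega>) \<in> borel_measurable N"
    using gamma_process_measurable[OF gp] s by auto
next
  fix \<omega> assume "\<omega> \<in> space N" show "g (0 + s) \<omega> - g s \<omega> = 0" by simp
next
  fix ts :: "nat \<Rightarrow> real" and n :: nat
  assume ts: "0 \<le> ts 0 \<and> (\<forall>i<n. ts i < ts (Suc i))"
  have "prob_space.indep_vars N (\<lambda>_. borel) (\<lambda>i \<omega>. g ((\<lambda>i. ts i + s) (Suc i)) \<omega> - g ((\<lambda>i. ts i + s) i) \<omega>) {..<n}"
    by (rule gamma_process_indep[OF gp]) (use ts s in auto)
  then show "prob_space.indep_vars N (\<lambda>_. borel) (\<lambda>i \<omega>. (g (ts (Suc i) + s) \<omega> - g s \<omega>) - (g (ts i + s) \<omega> - g s \<omega>)) {..<n}"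
    by simp
next
  fix u t :: real assume ut: "0 \<le> u \<and> u < t"
  have "distributed N lborel (\<lambda>\<omega>. g (t + s) \<omega> - g (u + s) \<omega>) (\<lambda>x. ennreal (gamma_density (m * (t - u)) x))"
    using gamma_process_distributed[OF gp, of "u + s" "t + s"] ut s by simp
  then show "distributed N lborel (\<lambda>\<omega>. (g (t + s) \<omega> - g s \<omega>) - (g (u + s) \<omega> - g s \<omega>))
     (\<lambda>x. ennreal (indicator {0<..} x * x powr (m * (t - u) - 1) * exp (- x) / Gamma (m * (t - u))))"
    by (simp add: gamma_density_def)
qed

lemma strict_incr_mono_le:
  assumes "\<forall>i<n. (u::nat \<Rightarrow> 'a::order) i < u (Suc i)"
  shows "i \<le> j \<Longrightarrow> j \<le> n \<Longrightarrow> u i \<le> u j"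
proof (induction j)
  case (Suc j)
  show ?case
  proof (cases "i = Suc j")
    case False
    then have "i \<le> j" using Suc by auto
    then have "u i \<le> u j" using Suc by auto
    also have "u j \<le> u (Suc j)" using assms Suc by (auto intro: less_imp_le)
    finally show ?thesis .
  qed simp
qed simp

lemma increments_law:
  assumes gp: "gamma_process N g m" and m: "m > 0" and u: "\<forall>i<n. u i < u (Suc i)" and u0: "u 0 \<ge> 0" and n: "n \<ge> 1"
  shows "distr N (vec_borel n) (\<lambda>\<omega>. \<lambda>i\<in>{..<n}. g (u (Suc i)) \<omega> - g (u i) \<omega>) = gamma_vec (\<lambda>i. if i < n then m * (u (Suc i) - u i) else 1) n"
proof -
  interpret prob_space N by (rule gamma_process_prob[OF gp])
  have ui: "u i \<ge> 0" if "i \<le> n" for i using strict_incr_mono_le[OF u, of 0 i] that u0 by auto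
  have I: "indep_vars (\<lambda>_. borel) (\<lambda>i \<omega>. g (u (Suc i)) \<omega> - g (u i) \<omega>) {..<n}"
    using gamma_process_indep[OF gp _ u] u0 by simp
  have rv: "random_variable borel (\<lambda>\<omega>. g (u (Suc i)) \<omega> - g (u i) \<omega>)" if "i \<in> {..<n}" for i
    using that ui[of i] ui[of "Suc i"] gamma_process_measurable[OF gp] by auto
  have "distr N (vec_borel n) (\<lambda>\<omega>. \<lambda>i\<in>{..<n}. g (u (Suc i)) \<omega> - g (u i) \<omega>) = PiM {..<n} (\<lambda>i. distr N borel (\<lambda>\<omega>. g (u (Suc i)) \<omega> - g (u i) \<omega>))"
    using indep_vars_iff_distr_eq_PiM'[where I="{..<n}" and M'="\<lambda>_. borel" and X="\<lambda>i \<omega>. g (u (Suc i)) \<omega> - g (u i) \<omega>"] I rv n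
    by (auto simp: lessThan_empty_iff)
  also have "\<dots> = gamma_vec (\<lambda>i. if i < n then m * (u (Suc i) - u i) else 1) n"
    by (rule PiM_cong) (use ui u gamma_process_increment_law[OF gp] in auto)
  finally show ?thesis .
qed

lemma increments_indep_start:
  assumes gp: "gamma_process N g m" and u: "\<forall>i<n. u i < u (Suc i)" and u0: "u 0 = s" and s: "s > 0"
  shows "indep_rv N borel (g s) (vec_borel n) (\<lambda>\<omega>. \<lambda>i\<in>{..<n}. g (u (Suc i)) \<omega> - g (u i) \<omega>)"
proof -
  interpret prob_space N by (rule gamma_process_prob[OF gp])
  (* the grid 0 < u 0 < ... < u n, whose first increment is g(s) *)
  define grid0 where "grid0 = (\<lambda>i. if i = 0 then 0 else u (i - 1))"
  have grid0: "\<forall>i<Suc n. grid0 i < grid0 (Suc i)"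
  proof (intro allI impI)
    fix i assume i: "i < Suc n"
    show "grid0 i < grid0 (Suc i)"
    proof (cases i)
      case (Suc k)
      then show ?thesis using u i by (simp add: grid0_def)
    qed (use u0 s in \<open>simp add: grid0_def\<close>)
  qed
  define X where "X = (\<lambda>i \<omega>. g (grid0 (Suc i)) \<omega> - g (grid0 i) \<omega>)"
  have incr_indep: "indep_vars (\<lambda>_. borel) X {..<Suc n}"
    unfolding X_def by (rule gamma_process_indep[OF gp _ grid0]) (simp add: grid0_def)
  have blocks_indep: "indep_var (PiM {0} (\<lambda>_. borel)) (\<lambda>\<omega>. restrict (\<lambda>i. X i \<omega>) {0})
      (PiM {Suc 0..<Suc n} (\<lambda>_. borel)) (\<lambda>\<omega>. restrict (\<lambda>i. X i \<omega>) {Suc 0..<Suc n})"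
    by (rule indep_var_restrict[OF incr_indep]) auto
  have blocks_indep_rv: "indep_rv N (PiM {0} (\<lambda>_. borel)) (\<lambda>\<omega>. restrict (\<lambda>i. X i \<omega>) {0})
      (PiM {Suc 0..<Suc n} (\<lambda>_. borel)) (\<lambda>\<omega>. restrict (\<lambda>i. X i \<omega>) {Suc 0..<Suc n})"
    by (rule indep_var_imp_rv[OF prob_space_axioms blocks_indep])
  have first_m: "(\<lambda>v. v 0) \<in> measurable (PiM {0::nat} (\<lambda>_. borel)) (borel :: real measure)" by simp
  have shift_m: "(\<lambda>v. \<lambda>i\<in>{..<n}. v (Suc i)) \<in> measurable (PiM {Suc 0..<Suc n} (\<lambda>_. borel)) (vec_borel n)"
    by (rule measurable_restrict) auto
  have components_indep: "indep_rv N borel (\<lambda>\<omega>. restrict (\<lambda>i. X i \<omega>) {0} 0) (vec_borel n) (\<lambda>\<omega>. \<lambda>i\<in>{..<n}. restrict (\<lambda>i. X i \<omega>) {Suc 0..<Suc n} (Suc i))"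
    by (rule indep_rv_compose[OF blocks_indep_rv first_m shift_m prob_space_axioms])
  show ?thesis
  proof (rule indep_rv_cong[OF components_indep])
    fix \<omega> assume "\<omega> \<in> space N"
    then show "restrict (\<lambda>i. X i \<omega>) {0} 0 = g s \<omega>"
      using gamma_process_zero[OF gp] u0 by (simp add: X_def grid0_def)
    show "(\<lambda>i\<in>{..<n}. restrict (\<lambda>i. X i \<omega>) {Suc 0..<Suc n} (Suc i)) = (\<lambda>i\<in>{..<n}. g (u (Suc i)) \<omega> - g (u i) \<omega>)"
      by (auto simp: X_def grid0_def fun_eq_iff)
  qed
qed

text \<open>Along a grid starting at s > 0, the proportions of the increments are independent of the
  pair formed by g(s) and the sum of the increments: g(s) is independent of the increments,
  and the proportions are independent of their sum.\<close>
lemma increments_proportions_indep: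
  assumes gp: "gamma_process N g m" and m: "m > 0" and u: "\<forall>i<n. u i < u (Suc i)" and u0: "u 0 = s"
    and s: "s > 0" and n: "n \<ge> 1"
  defines "incr \<equiv> (\<lambda>\<omega>. \<lambda>i\<in>{..<n}. g (u (Suc i)) \<omega> - g (u i) \<omega>)"
  shows "indep_rv N (vec_borel n) (\<lambda>\<omega>. proportions n (incr \<omega>)) (borel \<Otimes>\<^sub>M borel) (\<lambda>\<omega>. (g s \<omega>, coord_sum n (incr \<omega>)))"
proof -
  interpret NP: prob_space N by (rule gamma_process_prob[OF gp])
  define a where "a = (\<lambda>i. if i < n then m * (u (Suc i) - u i) else 1)"
  have a: "\<forall>i. a i > 0" using m u by (auto simp: a_def)
  obtain \<nu> where nu: "prob_space \<nu>" "sets \<nu> = sets (vec_borel n)"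
    "distr (gamma_vec a n) (vec_borel n \<Otimes>\<^sub>M borel) (\<lambda>y. (proportions n y, coord_sum n y)) = \<nu> \<Otimes>\<^sub>M gamma_distr (\<Sum>i<n. a i)"
    using dirichlet_total_indep[OF a n] by blast
  have sum_pos: "(\<Sum>i<n. a i) > 0" using a n by (intro sum_pos) (auto simp: lessThan_empty_iff)
  have ui: "u i \<ge> 0" if "i \<le> n" for i using strict_incr_mono_le[OF u, of 0 i] that u0 s by auto
  have incr_m: "incr \<in> measurable N (vec_borel n)"
    unfolding incr_def by (rule measurable_restrict) (use gamma_process_measurable[OF gp] ui in auto)
  have law: "distr N (vec_borel n) incr = gamma_vec a n"
    unfolding incr_def a_def by (rule increments_law[OF gp m u]) (use u0 s n in auto)
  have "distr N (vec_borel n \<Otimes>\<^sub>M borel) (\<lambda>\<omega>. (proportions n (incr \<omega>), coord_sum n (incr \<omega>)))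
      = distr (gamma_vec a n) (vec_borel n \<Otimes>\<^sub>M borel) (\<lambda>y. (proportions n y, coord_sum n y))"
    using incr_m unfolding law[symmetric] by (subst distr_distr) (auto simp: comp_def)
  then have proportions_sum: "indep_rv N (vec_borel n) (\<lambda>\<omega>. proportions n (incr \<omega>)) borel (\<lambda>\<omega>. coord_sum n (incr \<omega>))"
    using incr_m nu sum_pos prob_space_gamma_distr
    by (intro indep_rv_of_product[OF NP.prob_space_axioms]) auto
  have "indep_rv N borel (g s) (vec_borel n) incr"
    unfolding incr_def by (rule increments_indep_start[OF gp u u0 s])
  from indep_rv_compose[OF this measurable_ident_sets[OF refl], of "\<lambda>y. (proportions n y, coord_sum n y)"]
  have "indep_rv N borel (g s) (vec_borel n \<Otimes>\<^sub>M borel) (\<lambda>\<omega>. (proportions n (incr \<omega>), coord_sum n (incr \<omega>)))"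
    using NP.prob_space_axioms by simp
  from indep_rv_regroup[OF NP.prob_space_axioms this proportions_sum] show ?thesis .
qed

lemma coord_sum_increments: "coord_sum n (\<lambda>i\<in>{..<n}. x (Suc i) - x i) = x n - (x 0 :: real)"
  unfolding coord_sum_def by (simp add: sum_lessThan_telescope)

lemma proportions_increments_partial_sum:
  assumes "k \<le> n"
  shows "(\<Sum>i<k. proportions n (\<lambda>i\<in>{..<n}. x (Suc i) - x i) i) = (x k - x 0) / (x n - (x 0 :: real))"
proof -
  have "(\<Sum>i<k. proportions n (\<lambda>i\<in>{..<n}. x (Suc i) - x i) i) = (\<Sum>i<k. (x (Suc i) - x i) / (x n - x 0))"
    using assms by (intro sum.cong) (auto simp: proportions_def coord_sum_increments)
  also have "\<dots> = (x k - x 0) / (x n - x 0)"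
    by (simp add: sum_divide_distrib[symmetric] sum_lessThan_telescope)
  finally show ?thesis .
qed

lemma finite_grid:
  fixes K :: "'a::linorder set"
  assumes K: "finite K" "K \<subseteq> {s..T}" "s \<in> K" "T \<in> K" and sT: "s < T"
  obtains n u where "n \<ge> 1" "\<forall>i<n. u i < u (Suc i)" "u 0 = s" "u n = T"
    "\<And>x. x \<in> K \<Longrightarrow> \<exists>k\<le>n. u k = x"
proof -
  define xs where "xs = sorted_list_of_set K"
  have xs: "sorted_wrt (<) xs" "set xs = K" "distinct xs"
    using K(1) by (auto simp: xs_def strict_sorted_list_of_set)
  define n where "n = length xs - 1"
  have "card K \<ge> 2"
  proof -
    have "{s, T} \<subseteq> K" using K by auto
    from card_mono[OF K(1) this] show ?thesis using sT by simp
  qed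
  then have len: "length xs = Suc n" "n \<ge> 1"
    using distinct_card[OF xs(3)] xs(2) by (auto simp: n_def)
  define u where "u = (\<lambda>k. xs ! k)"
  have uK: "u k \<in> K" if "k \<le> n" for k using that len xs(2) by (auto simp: u_def)
  have uless: "u i < u j" if "i < j" "j \<le> n" for i j
    using sorted_wrt_nth_less[OF xs(1) that(1)] that len by (auto simp: u_def)
  have idx: "\<exists>k\<le>n. u k = x" if "x \<in> K" for x
  proof -
    from that xs(2) obtain k where "k < length xs" "xs ! k = x" by (auto simp: in_set_conv_nth)
    then show ?thesis using len by (intro exI[of _ k]) (auto simp: u_def)
  qed
  have "u 0 = s"
  proof -
    obtain k where k: "k \<le> n" "u k = s" using idx[OF K(3)] by blast
    have "u 0 \<le> u k" using uless[of 0 k] k by (cases k) auto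
    moreover have "u 0 \<ge> s" using uK[of 0] K(2) by auto
    ultimately show ?thesis using k by auto
  qed
  moreover have "u n = T"
  proof -
    obtain k where k: "k \<le> n" "u k = T" using idx[OF K(4)] by blast
    have "u k \<le> u n" using uless[of k n] k by (cases "k = n") auto
    moreover have "u n \<le> T" using uK[of n] K(2) by auto
    ultimately show ?thesis using k by auto
  qed
  moreover have "\<forall>i<n. u i < u (Suc i)" using uless by auto
  ultimately show ?thesis using that len(2) idx by blast
qed

text \<open>Finite-dimensional case of the independence of the bridge renormalised at s > 0 from
  g(s)/g(T): refine the times J to a grid from s to T, apply the independence of proportions
  and sum for the increments on this grid, and recover the values at the times in J as
  partial sums of the proportions.\<close>
lemma ratio_indep_cylinder:
  assumes gp: "gamma_process N g m" and m: "m > 0" and s: "0 < s" and sT: "s < T"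
    and J: "finite J" "J \<subseteq> {s..T}"
  shows "indep_rv N (PiM J (\<lambda>_. borel)) (\<lambda>\<omega>. \<lambda>j\<in>J. (g j \<omega> - g s \<omega>) / (g T \<omega> - g s \<omega>)) borel (\<lambda>\<omega>. g s \<omega> / g T \<omega>)"
proof -
  interpret NP: prob_space N by (rule gamma_process_prob[OF gp])
  obtain n u where n: "n \<ge> 1" and u: "\<forall>i<n. u i < u (Suc i)" and u0: "u 0 = s" and un: "u n = T"
    and idx: "\<And>x. x \<in> insert s (insert T J) \<Longrightarrow> \<exists>k\<le>n. u k = x"
    by (rule finite_grid[of "insert s (insert T J)" s T]) (use J sT in auto)
  define index where "index = (\<lambda>j. SOME k. k \<le> n \<and> u k = j)"
  have index: "index j \<le> n" "u (index j) = j" if "j \<in> J" for j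
  proof -
    have "\<exists>k. k \<le> n \<and> u k = j" using idx[of j] that by auto
    from someI_ex[OF this] show "index j \<le> n" "u (index j) = j" by (auto simp: index_def)
  qed
  define incr where "incr = (\<lambda>\<omega>. \<lambda>i\<in>{..<n}. g (u (Suc i)) \<omega> - g (u i) \<omega>)"
  have grid_indep: "indep_rv N (vec_borel n) (\<lambda>\<omega>. proportions n (incr \<omega>)) (borel \<Otimes>\<^sub>M borel) (\<lambda>\<omega>. (g s \<omega>, coord_sum n (incr \<omega>)))"
    unfolding incr_def by (rule increments_proportions_indep[OF gp m u u0 s n])
  define partial_sums where "partial_sums = (\<lambda>q::nat\<Rightarrow>real. \<lambda>j\<in>J. \<Sum>i<index j. q i)"
  define ratio where "ratio = (\<lambda>p::real\<times>real. fst p / (fst p + snd p))"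
  have partial_sums_m: "partial_sums \<in> measurable (vec_borel n) (PiM J (\<lambda>_. borel))"
    unfolding partial_sums_def
  proof (rule measurable_restrict)
    fix j assume "j \<in> J"
    then have "index j \<le> n" by (rule index)
    then show "(\<lambda>q::nat\<Rightarrow>real. \<Sum>i<index j. q i) \<in> borel_measurable (vec_borel n)"
      by (intro borel_measurable_sum) auto
  qed
  have ratio_m: "ratio \<in> borel_measurable (borel \<Otimes>\<^sub>M borel)" unfolding ratio_def by measurable
  have grid_functions_indep: "indep_rv N (PiM J (\<lambda>_. borel)) (\<lambda>\<omega>. partial_sums (proportions n (incr \<omega>))) borel (\<lambda>\<omega>. ratio (g s \<omega>, coord_sum n (incr \<omega>)))"
    by (rule indep_rv_compose[OF grid_indep partial_sums_m ratio_m NP.prob_space_axioms])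
  show ?thesis
  proof (rule indep_rv_cong[OF grid_functions_indep])
    fix \<omega>
    have sum: "coord_sum n (incr \<omega>) = g T \<omega> - g s \<omega>"
      using coord_sum_increments[of n "\<lambda>k. g (u k) \<omega>"] un u0 by (simp add: incr_def)
    then show "ratio (g s \<omega>, coord_sum n (incr \<omega>)) = g s \<omega> / g T \<omega>"
      unfolding ratio_def by simp
    show "partial_sums (proportions n (incr \<omega>)) = (\<lambda>j\<in>J. (g j \<omega> - g s \<omega>) / (g T \<omega> - g s \<omega>))"
      using proportions_increments_partial_sum[of _ n "\<lambda>k. g (u k) \<omega>"] index u0 un
      by (auto simp: partial_sums_def incr_def fun_eq_iff)
  qed
qed

text \<open>For a gamma process, the normalised increments on [s,T] are independent of g(s)/g(T).
  For s = 0 the ratio is constant; otherwise this follows from the finite-dimensional case.\<close>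
lemma ratio_indep_process:
  assumes gp: "gamma_process N g m" and m: "m > 0" and s: "0 \<le> s" and sT: "s < T"
  shows "indep_rv N (PiM {s..T} (\<lambda>_. borel)) (\<lambda>\<omega>. \<lambda>t\<in>{s..T}. (g t \<omega> - g s \<omega>) / (g T \<omega> - g s \<omega>))
    borel (\<lambda>\<omega>. g s \<omega> / g T \<omega>)"
proof -
  interpret prob_space N by (rule gamma_process_prob[OF gp])
  define R where "R = (\<lambda>\<omega>. \<lambda>t\<in>{s..T}. (g t \<omega> - g s \<omega>) / (g T \<omega> - g s \<omega>))"
  have gm: "g t \<in> borel_measurable N" if "t \<ge> s" for t using gamma_process_measurable[OF gp] that s by auto
  have Rm: "R \<in> measurable N (PiM {s..T} (\<lambda>_. borel))"
    unfolding R_def by (rule measurable_restrict) (use gm sT in auto)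
  have ratio_m: "(\<lambda>\<omega>. g s \<omega> / g T \<omega>) \<in> borel_measurable N" using gm[of s] gm[of T] sT by auto
  have "indep_rv N (PiM {s..T} (\<lambda>_. borel)) R borel (\<lambda>\<omega>. g s \<omega> / g T \<omega>)"
  proof (cases "s = 0")
    case True
    show ?thesis
      by (rule indep_rv_const[OF prob_space_axioms Rm ratio_m, of 0]) (simp add: True gamma_process_zero[OF gp])
  next
    case False
    show ?thesis
    proof (rule indep_rv_process_of_cylinders[OF prob_space_axioms Rm ratio_m])
      fix J assume J: "finite J" "J \<subseteq> {s..T}"
      show "indep_rv N (PiM J (\<lambda>_. borel)) (\<lambda>\<omega>. restrict (R \<omega>) J) borel (\<lambda>\<omega>. g s \<omega> / g T \<omega>)"
        by (rule indep_rv_cong[OF ratio_indep_cylinder[OF gp m _ sT J]])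
           (use False s J(2) in \<open>auto simp: R_def fun_eq_iff\<close>)
    qed
  qed
  then show ?thesis unfolding R_def .
qed

lemma gamma_process_ratio_measurable:
  assumes gp: "gamma_process N g m" and "0 \<le> s" "s \<le> T"
  shows "(\<lambda>\<omega>. (\<lambda>t\<in>{s..T}. (g t \<omega> - g s \<omega>) / (g T \<omega> - g s \<omega>), g s \<omega> / g T \<omega>))
    \<in> measurable N (PiM {s..T} (\<lambda>_. borel) \<Otimes>\<^sub>M borel)"
proof -
  have "g t \<in> borel_measurable N" if "t \<ge> 0" for t
    using gamma_process_measurable[OF gp] that by auto
  then show ?thesis using assms(2,3) by (intro measurable_Pair measurable_restrict) auto
qed

section \<open>Gamma bridges renormalised at an intermediate time\<close>

lemma gamma_bridge_path_measurable:
  assumes "gamma_bridge M b s T m"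
  shows "(\<lambda>\<omega>. \<lambda>t\<in>{s..T}. b t \<omega>) \<in> measurable M (PiM {s..T} (\<lambda>_. borel))"
  using assms by (intro measurable_restrict) (auto simp: gamma_bridge_def)

definition renormalise :: "real \<Rightarrow> real \<Rightarrow> (real \<Rightarrow> real) \<Rightarrow> (real \<Rightarrow> real)" where
  "renormalise s T f = (\<lambda>t\<in>{s..T}. (f t - f s) / (1 - f s))"

lemma renormalise_restrict:
  assumes "0 \<le> s"
  shows "renormalise s T (\<lambda>t\<in>{0..T}. f t) = (\<lambda>t\<in>{s..T}. (f t - f s) / (1 - f s))"
  using assms by (auto simp: renormalise_def fun_eq_iff)

lemma renormalise_split_measurable:
  assumes "0 \<le> s" "s \<le> T"
  shows "(\<lambda>f. (renormalise s T f, f s))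
    \<in> measurable (PiM {0..T} (\<lambda>_. borel)) (PiM {s..T} (\<lambda>_. borel) \<Otimes>\<^sub>M borel)"
  unfolding renormalise_def using assms
  by (intro measurable_Pair measurable_restrict measurable_component_singleton) auto

lemma gamma_bridge_split_measurable:
  assumes GB: "gamma_bridge M gam 0 T m" and "0 \<le> s" "s \<le> T"
  shows "(\<lambda>\<omega>. (renormalise s T (\<lambda>t\<in>{0..T}. gam t \<omega>), gam s \<omega>))
    \<in> measurable M (PiM {s..T} (\<lambda>_. borel) \<Otimes>\<^sub>M borel)"
  using measurable_compose[OF gamma_bridge_path_measurable[OF GB] renormalise_split_measurable] assms
  by simp

text \<open>All three claims about the bridge are read off from it.\<close>
lemma gamma_bridge_split_law:
  assumes GB: "gamma_bridge M gam 0 T m" and m: "m > 0" and s: "0 \<le> s" and sT: "s < T"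
  obtains N :: "(real \<Rightarrow> real) measure" and g where "gamma_process N g m"
    and "distr M (PiM {s..T} (\<lambda>_. borel) \<Otimes>\<^sub>M borel) (\<lambda>\<omega>. (renormalise s T (\<lambda>t\<in>{0..T}. gam t \<omega>), gam s \<omega>))
       = distr N (PiM {s..T} (\<lambda>_. borel) \<Otimes>\<^sub>M borel)
           (\<lambda>\<omega>. (\<lambda>t\<in>{s..T}. (g t \<omega> - g s \<omega>) / (g T \<omega> - g s \<omega>), g s \<omega> / g T \<omega>))"
proof -
  obtain N :: "(real \<Rightarrow> real) measure" and g where gp: "gamma_process N g m"
    and law: "process_law M {0..T} gam = process_law N {0..T} (\<lambda>t \<omega>. g (t - 0) \<omega> / g (T - 0) \<omega>)"
    using GB unfolding gamma_bridge_def by blast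
  have Nm: "(\<lambda>\<omega>. \<lambda>t\<in>{0..T}. g t \<omega> / g T \<omega>) \<in> measurable N (PiM {0..T} (\<lambda>_. borel))"
    using gamma_process_measurable[OF gp] sT by (intro measurable_restrict) auto
  have pos: "AE \<omega> in N. g T \<omega> > 0"
    using gamma_process_AE_pos[OF gp m order.refl, of T] sT s gamma_process_zero[OF gp]
    by (auto elim: AE_mp)
  have "distr M (PiM {s..T} (\<lambda>_. borel) \<Otimes>\<^sub>M borel) (\<lambda>\<omega>. (renormalise s T (\<lambda>t\<in>{0..T}. gam t \<omega>), (\<lambda>t\<in>{0..T}. gam t \<omega>) s))
      = distr N (PiM {s..T} (\<lambda>_. borel) \<Otimes>\<^sub>M borel) (\<lambda>\<omega>. (renormalise s T (\<lambda>t\<in>{0..T}. g t \<omega> / g T \<omega>), (\<lambda>t\<in>{0..T}. g t \<omega> / g T \<omega>) s))"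
    using law s sT
    by (intro distr_transfer[OF _ gamma_bridge_path_measurable[OF GB] Nm renormalise_split_measurable])
       (auto simp: process_law_def)
  also have "\<dots> = distr N (PiM {s..T} (\<lambda>_. borel) \<Otimes>\<^sub>M borel)
           (\<lambda>\<omega>. (\<lambda>t\<in>{s..T}. (g t \<omega> - g s \<omega>) / (g T \<omega> - g s \<omega>), g s \<omega> / g T \<omega>))"
  proof (rule distr_cong_AE)
    show "AE \<omega> in N. (renormalise s T (\<lambda>t\<in>{0..T}. g t \<omega> / g T \<omega>), (\<lambda>t\<in>{0..T}. g t \<omega> / g T \<omega>) s)
        = (\<lambda>t\<in>{s..T}. (g t \<omega> - g s \<omega>) / (g T \<omega> - g s \<omega>), g s \<omega> / g T \<omega>)"
      using pos by eventually_elim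
        (use s sT in \<open>auto simp: renormalise_def fun_eq_iff divide_simps\<close>)
  qed (use measurable_compose[OF Nm renormalise_split_measurable] gamma_process_ratio_measurable[OF gp s less_imp_le[OF sT]] s sT in auto)
  finally show ?thesis using that gp s sT by simp
qed

text \<open>Almost surely a gamma bridge has not yet reached 1 at a time s < T, since its value
  at s has the law of g(s)/g(T) and g has positive increments.\<close>
lemma gamma_bridge_AE_ne_one:
  assumes GB: "gamma_bridge M gam 0 T m" and m: "m > 0" and s: "0 \<le> s" and sT: "s < T"
  shows "AE \<omega> in M. gam s \<omega> \<noteq> 1"
proof -
  obtain N :: "(real \<Rightarrow> real) measure" and g where gp: "gamma_process N g m" and law: "distr M (PiM {s..T} (\<lambda>_. borel) \<Otimes>\<^sub>M borel)
      (\<lambda>\<omega>. (renormalise s T (\<lambda>t\<in>{0..T}. gam t \<omega>), gam s \<omega>))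
    = distr N (PiM {s..T} (\<lambda>_. borel) \<Otimes>\<^sub>M borel)
      (\<lambda>\<omega>. (\<lambda>t\<in>{s..T}. (g t \<omega> - g s \<omega>) / (g T \<omega> - g s \<omega>), g s \<omega> / g T \<omega>))"
    by (rule gamma_bridge_split_law[OF GB m s sT])
  have ratio_m: "(\<lambda>\<omega>. g s \<omega> / g T \<omega>) \<in> borel_measurable N"
    using gamma_process_measurable[OF gp] s sT by auto
  have eq: "distr M borel (gam s) = distr N borel (\<lambda>\<omega>. g s \<omega> / g T \<omega>)"
    using distr_transfer[OF law gamma_bridge_split_measurable[OF GB s] gamma_process_ratio_measurable[OF gp s less_imp_le[OF sT]] measurable_snd] sT
    by simp
  have "AE \<omega> in N. g s \<omega> / g T \<omega> \<noteq> 1"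
    using gamma_process_AE_pos[OF gp m s sT] by eventually_elim (auto simp: divide_eq_1_iff)
  then have "AE x in distr N borel (\<lambda>\<omega>. g s \<omega> / g T \<omega>). x \<noteq> 1"
    using ratio_m by (subst AE_distr_iff) auto
  then have "AE x in distr M borel (gam s). x \<noteq> 1" by (simp only: eq)
  then show ?thesis
    using GB s sT by (intro AE_distrD[of "gam s" M borel]) (auto simp: gamma_bridge_def)
qed

text \<open>The renormalised bridge after s is a standard gamma bridge over [s,T]: its law is
  that of the normalised increments of the shifted gamma process g(s + _) - g(s).\<close>
lemma gamma_bridge_renormalise:
  assumes GB: "gamma_bridge M gam 0 T m" and m: "m > 0" and s: "0 \<le> s" and sT: "s < T"
  shows "gamma_bridge M (\<lambda>t \<omega>. (gam t \<omega> - gam s \<omega>) / (1 - gam s \<omega>)) s T m"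
proof -
  obtain N :: "(real \<Rightarrow> real) measure" and g where gp: "gamma_process N g m" and law: "distr M (PiM {s..T} (\<lambda>_. borel) \<Otimes>\<^sub>M borel)
      (\<lambda>\<omega>. (renormalise s T (\<lambda>t\<in>{0..T}. gam t \<omega>), gam s \<omega>))
    = distr N (PiM {s..T} (\<lambda>_. borel) \<Otimes>\<^sub>M borel)
      (\<lambda>\<omega>. (\<lambda>t\<in>{s..T}. (g t \<omega> - g s \<omega>) / (g T \<omega> - g s \<omega>), g s \<omega> / g T \<omega>))"
    by (rule gamma_bridge_split_law[OF GB m s sT])
  have "distr M (PiM {s..T} (\<lambda>_. borel)) (\<lambda>\<omega>. renormalise s T (\<lambda>t\<in>{0..T}. gam t \<omega>))
      = distr N (PiM {s..T} (\<lambda>_. borel)) (\<lambda>\<omega>. \<lambda>t\<in>{s..T}. (g t \<omega> - g s \<omega>) / (g T \<omega> - g s \<omega>))"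
    using distr_transfer[OF law gamma_bridge_split_measurable[OF GB s] gamma_process_ratio_measurable[OF gp s less_imp_le[OF sT]] measurable_fst] sT
    by simp
  then have "process_law M {s..T} (\<lambda>t \<omega>. (gam t \<omega> - gam s \<omega>) / (1 - gam s \<omega>))
      = process_law N {s..T} (\<lambda>t \<omega>. (g (t - s + s) \<omega> - g s \<omega>) / (g (T - s + s) \<omega> - g s \<omega>))"
    by (simp add: process_law_def renormalise_restrict[OF s])
  moreover have "(\<lambda>\<omega>. (gam t \<omega> - gam s \<omega>) / (1 - gam s \<omega>)) \<in> borel_measurable M" if "t \<in> {s..T}" for t
  proof -
    have "gam t \<in> borel_measurable M" "gam s \<in> borel_measurable M"
      using GB that s by (auto simp: gamma_bridge_def)
    then show ?thesis by (intro borel_measurable_divide borel_measurable_diff) auto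
  qed
  ultimately show ?thesis
    unfolding gamma_bridge_def using gamma_process_shift[OF gp s] by blast
qed

text \<open>The renormalised bridge after s is independent of the value of the bridge at s,
  because the normalised increments of g on [s,T] are independent of g(s)/g(T).\<close>
lemma gamma_bridge_renormalise_indep:
  assumes M: "prob_space M" and GB: "gamma_bridge M gam 0 T m" and m: "m > 0"
    and s: "0 \<le> s" and sT: "s < T"
  shows "indep_rv M (PiM {s..T} (\<lambda>_. borel)) (\<lambda>\<omega>. renormalise s T (\<lambda>t\<in>{0..T}. gam t \<omega>)) borel (gam s)"
proof -
  obtain N :: "(real \<Rightarrow> real) measure" and g where gp: "gamma_process N g m" and law: "distr M (PiM {s..T} (\<lambda>_. borel) \<Otimes>\<^sub>M borel)
      (\<lambda>\<omega>. (renormalise s T (\<lambda>t\<in>{0..T}. gam t \<omega>), gam s \<omega>))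
    = distr N (PiM {s..T} (\<lambda>_. borel) \<Otimes>\<^sub>M borel)
      (\<lambda>\<omega>. (\<lambda>t\<in>{s..T}. (g t \<omega> - g s \<omega>) / (g T \<omega> - g s \<omega>), g s \<omega> / g T \<omega>))"
    by (rule gamma_bridge_split_law[OF GB m s sT])
  have split_m: "(\<lambda>\<omega>. (renormalise s T (\<lambda>t\<in>{0..T}. gam t \<omega>), gam s \<omega>))
      \<in> measurable M (PiM {s..T} (\<lambda>_. borel) \<Otimes>\<^sub>M borel)"
    using gamma_bridge_split_measurable[OF GB s] sT by simp
  show ?thesis
    by (rule indep_rv_eq_law[OF M gamma_process_prob[OF gp] _ _ law ratio_indep_process[OF gp m s sT]])
       (use measurable_compose[OF split_m measurable_fst] measurable_compose[OF split_m measurable_snd] in simp_all)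
qed

theorem lemma2:
  fixes M :: "'a measure" and gam :: "real \<Rightarrow> 'a \<Rightarrow> real" and X :: "'a \<Rightarrow> real"
    and m T s :: real
  assumes "prob_space M"
    and "m > 0"
    and "gamma_bridge M gam 0 T m"
    and "X \<in> borel_measurable M"
    and "\<forall>\<omega>\<in>space M. X \<omega> > 0"
    and "indep_rv M borel X (PiM {0..T} (\<lambda>_. borel)) (\<lambda>\<omega>. \<lambda>t\<in>{0..T}. gam t \<omega>)"
    and "0 \<le> s" and "s < T"
  defines "\<xi> \<equiv> (\<lambda>t \<omega>. X \<omega> * gam t \<omega>)"
    and "Z \<equiv> (\<lambda>\<omega>. (1 - gam s \<omega>) * X \<omega>)"
    and "\<delta> \<equiv> (\<lambda>t \<omega>. (gam t \<omega> - gam s \<omega>) / (1 - gam s \<omega>))"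
  shows "(AE \<omega> in M. \<forall>t\<in>{s..T}. \<xi> t \<omega> = \<xi> s \<omega> + Z \<omega> * \<delta> t \<omega>)
       \<and> gamma_bridge M \<delta> s T m
       \<and> indep_rv M (PiM {s..T} (\<lambda>_. borel)) (\<lambda>\<omega>. \<lambda>t\<in>{s..T}. \<delta> t \<omega>)
            borel (\<lambda>\<omega>. (\<xi> s \<omega>, Z \<omega>))"
proof -
  note M = assms(1) and m = assms(2) and GB = assms(3) and XI = assms(6) and s = assms(7) and sT = assms(8)
  have "AE \<omega> in M. gam s \<omega> \<noteq> 1" by (rule gamma_bridge_AE_ne_one[OF GB m s sT])
  then have decomposition: "AE \<omega> in M. \<forall>t\<in>{s..T}. \<xi> t \<omega> = \<xi> s \<omega> + Z \<omega> * \<delta> t \<omega>"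
    by eventually_elim (auto simp: \<xi>_def Z_def \<delta>_def field_simps)
  have bridge: "gamma_bridge M \<delta> s T m"
    unfolding \<delta>_def by (rule gamma_bridge_renormalise[OF GB m s sT])
  have "indep_rv M borel X (PiM {s..T} (\<lambda>_. borel) \<Otimes>\<^sub>M borel)
      (\<lambda>\<omega>. (renormalise s T (\<lambda>t\<in>{0..T}. gam t \<omega>), (\<lambda>t\<in>{0..T}. gam t \<omega>) s))"
    using s sT by (intro indep_rv_compose[OF XI _ renormalise_split_measurable M]) auto
  then have "indep_rv M borel X (PiM {s..T} (\<lambda>_. borel) \<Otimes>\<^sub>M borel)
      (\<lambda>\<omega>. (renormalise s T (\<lambda>t\<in>{0..T}. gam t \<omega>), gam s \<omega>))"
    using s sT by simp
  from indep_rv_regroup[OF M this gamma_bridge_renormalise_indep[OF M GB m s sT]]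
  have "indep_rv M (PiM {s..T} (\<lambda>_. borel)) (\<lambda>\<omega>. renormalise s T (\<lambda>t\<in>{0..T}. gam t \<omega>))
      (borel \<Otimes>\<^sub>M borel) (\<lambda>\<omega>. (X \<omega>, gam s \<omega>))" .
  from indep_rv_compose[OF this measurable_ident_sets[OF refl], of "\<lambda>(x, c). (x * c, (1 - c) * x)" borel]
  have "indep_rv M (PiM {s..T} (\<lambda>_. borel)) (\<lambda>\<omega>. \<lambda>t\<in>{s..T}. \<delta> t \<omega>) borel (\<lambda>\<omega>. (\<xi> s \<omega>, Z \<omega>))"
    using M by (simp add: renormalise_restrict[OF s] \<xi>_def Z_def \<delta>_def)
  with decomposition bridge show ?thesis by blast
qed

end
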